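(* For $0\le k\le n-1$, the degree $k$ component of $\mathfrak{pvb}_n^!$ has dimension $L(n,n-k)$, where the Lah number $L(n,n-k)$ is the number of unordered partitions of $[n]=\{1,\dots,n\}$ into $n-k$ nonempty linearly ordered subsets.
   Context: $\mathfrak{pvb}_n^!$ is the graded $\mathbb{Q}$-algebra obtained as the quotient of the exterior algebra on degree-1 generators $r_{ij}$, $1\le i\ne j\le n$, by the ideal generated by $r_{ij}\wedge r_{ik}=r_{ij}\wedge r_{jk}-r_{ik}\wedge r_{kj}$, $r_{ik}\wedge r_{jk}=r_{ij}\wedge r_{jk}-r_{ji}\wedge r_{ik}$ (for $i,j,k$ distinct) and $r_{ij}\wedge r_{ji}=0$. *)

theory Defs
  imports Complex_Main "HOL-Library.Product_Lexorder" "HOL-Library.Function_Algebras"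
begin

text \<open>The exterior algebra over the rationals on generators r_ij, (i,j) in gens n, is
  modelled by coefficient functions on (finite) sets of generators: f S is the
  coefficient of the basis monomial e_S = r_{s1} \<and> ... \<and> r_{sm}, where s1 < ... < sm
  in the (lexicographic) linear order on pairs.\<close>

type_synonym gen = "nat \<times> nat"
type_synonym ext = "gen set \<Rightarrow> rat"

definition gens :: "nat \<Rightarrow> gen set" where
  "gens n = {(i, j). 1 \<le> i \<and> i \<le> n \<and> 1 \<le> j \<and> j \<le> n \<and> i \<noteq> j}"

definition qscale :: "rat \<Rightarrow> ext \<Rightarrow> ext" where
  "qscale c f = (\<lambda>S. c * f S)"

text \<open>sign of e_S \<and> e_T = sign S T * e_(S \<union> T) for disjoint S, T\<close>
definition wsign :: "gen set \<Rightarrow> gen set \<Rightarrow> rat" where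
  "wsign S T = (-1) ^ card {(s, t). s \<in> S \<and> t \<in> T \<and> t < s}"

definition wedge :: "ext \<Rightarrow> ext \<Rightarrow> ext" where
  "wedge f g = (\<lambda>U. \<Sum>S\<in>Pow U. wsign S (U - S) * f S * g (U - S))"

definition mono :: "gen set \<Rightarrow> ext" where
  "mono S = (\<lambda>U. if U = S then 1 else 0)"

definition r :: "nat \<Rightarrow> nat \<Rightarrow> ext" where
  "r i j = mono {(i, j)}"

definition rels :: "nat \<Rightarrow> ext set" where
  "rels n =
     {wedge (r i j) (r i k) - (wedge (r i j) (r j k) - wedge (r i k) (r k j)) | i j k.
        i \<in> {1..n} \<and> j \<in> {1..n} \<and> k \<in> {1..n} \<and> i \<noteq> j \<and> i \<noteq> k \<and> j \<noteq> k}
   \<union> {wedge (r i k) (r j k) - (wedge (r i j) (r j k) - wedge (r j i) (r i k)) | i j k.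
        i \<in> {1..n} \<and> j \<in> {1..n} \<and> k \<in> {1..n} \<and> i \<noteq> j \<and> i \<noteq> k \<and> j \<noteq> k}
   \<union> {wedge (r i j) (r j i) | i j. i \<in> {1..n} \<and> j \<in> {1..n} \<and> i \<noteq> j}"

definition ext_deg :: "nat \<Rightarrow> nat \<Rightarrow> ext set" where
  "ext_deg n k = module.span qscale {mono S | S. S \<subseteq> gens n \<and> card S = k}"

text \<open>degree k component of the (homogeneous) two-sided ideal generated by the relations\<close>
definition ideal_deg :: "nat \<Rightarrow> nat \<Rightarrow> ext set" where
  "ideal_deg n k = module.span qscale
     {wedge (wedge (mono A) q) (mono B) | A B q.
        A \<subseteq> gens n \<and> B \<subseteq> gens n \<and> card A + card B + 2 = k \<and> q \<in> rels n}"

text \<open>dimension of the degree k component of the quotient pvb_n^!\<close>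
definition pvb_dual_dim :: "nat \<Rightarrow> nat \<Rightarrow> nat" where
  "pvb_dual_dim n k =
     vector_space.dim qscale (ext_deg n k) - vector_space.dim qscale (ideal_deg n k)"

definition lah_partitions :: "nat \<Rightarrow> nat \<Rightarrow> nat list set set" where
  "lah_partitions n m =
     {P. (\<forall>xs\<in>P. xs \<noteq> [] \<and> distinct xs) \<and>
         (\<forall>xs\<in>P. \<forall>ys\<in>P. xs \<noteq> ys \<longrightarrow> set xs \<inter> set ys = {}) \<and>
         (\<Union>xs\<in>P. set xs) = {1..n} \<and> finite P \<and> card P = m}"

definition lah :: "nat \<Rightarrow> nat \<Rightarrow> nat" where
  "lah n m = card (lah_partitions n m)"

end

theory Submission
  imports Defs
begin

text \<open>
  The degree k part of the exterior algebra is spanned, modulo the relation ideal, by the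
  edge monomials of the Lah partitions of [n] into n - k blocks, i.e. the wedge products of
  r_ab over all pairs of consecutive entries a, b of a block. By induction on the degree one
  multiplies an edge monomial by a generator r_ab and rewrites with the relations: if a and b
  lie in different blocks the product reduces to monomials of partitions with two blocks
  merged, and if they lie in the same block the product contains a cycle, and monomials
  containing a cycle lie in the ideal.

  The edge monomials are independent modulo the ideal. For each partition Q, order the
  entries of all blocks in one list and send r_ij to the sum of the generators x_t over the
  positions t from that of i up to, but excluding, that of j when i precedes j in a block of Q,
  and to 0 otherwise. This extends to an algebra map that kills the relations, does not vanish
  on the edge monomial of Q, and kills the edge monomial of every other partition with the same
  number of blocks.
\<close>

section \<open>A dimension formula for dual families\<close>

context vector_space
begin

lemma dual_family_disjoint:
  assumes L_I: "\<And>p x. p \<in> P \<Longrightarrow> x \<in> I \<Longrightarrow> L p x = 0"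
    and L_b: "\<And>p q. p \<in> P \<Longrightarrow> q \<in> P \<Longrightarrow> L p (b q) = 0 \<longleftrightarrow> p \<noteq> q"
    and "B \<subseteq> I"
  shows "b ` P \<inter> B = {}"
proof (intro equals0I)
  fix x assume "x \<in> b ` P \<inter> B"
  then obtain p where p: "p \<in> P" "b p \<in> B" by auto
  then have "L p (b p) = 0" using L_I \<open>B \<subseteq> I\<close> by blast
  then show False using L_b[OF p(1) p(1)] by simp
qed

lemma independent_Un_dual_family:
  fixes s :: "'a \<Rightarrow> 'c::ab_group_add \<Rightarrow> 'c"
  assumes P: "finite P" and B: "finite B" "independent B" "B \<subseteq> I"
    and L: "\<And>p. p \<in> P \<Longrightarrow> Vector_Spaces.linear scale s (L p)"
    and L_I: "\<And>p x. p \<in> P \<Longrightarrow> x \<in> I \<Longrightarrow> L p x = 0"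
    and L_b: "\<And>p q. p \<in> P \<Longrightarrow> q \<in> P \<Longrightarrow> L p (b q) = 0 \<longleftrightarrow> p \<noteq> q"
  shows "independent (b ` P \<union> B)"
proof (rule independent_if_scalars_zero)
  show fin: "finite (b ` P \<union> B)" using P B(1) by simp
  fix f x assume sum0: "(\<Sum>x\<in>b ` P \<union> B. f x *s x) = 0" and "x \<in> b ` P \<union> B"
  have disj: "b ` P \<inter> B = {}" using L_I L_b B(3) by (rule dual_family_disjoint)
  have coeff_b: "f (b p) = 0" if p: "p \<in> P" for p
  proof -
    interpret Lp: Vector_Spaces.linear scale s "L p" by (rule L[OF p])
    have "(\<Sum>x\<in>b ` P \<union> B. s (f x) (L p x)) = L p (\<Sum>x\<in>b ` P \<union> B. f x *s x)"
      by (simp add: Lp.sum Lp.scale)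
    also have "\<dots> = 0" by (simp add: sum0)
    finally have "(\<Sum>x\<in>b ` P \<union> B. s (f x) (L p x)) = 0" .
    moreover have "(\<Sum>x\<in>(b ` P \<union> B) - {b p}. s (f x) (L p x)) = 0"
    proof (rule sum.neutral, rule ballI)
      fix x assume "x \<in> (b ` P \<union> B) - {b p}"
      then have "L p x = 0" using B(3) L_I[OF p] L_b[OF p] by auto
      then show "s (f x) (L p x) = 0" by simp
    qed
    moreover have "b p \<in> b ` P \<union> B" using p by simp
    ultimately show ?thesis using L_b[OF p p] fin by (simp add: sum.remove)
  qed
  have "(\<Sum>x\<in>b ` P \<union> B. f x *s x) = (\<Sum>x\<in>b ` P. f x *s x) + (\<Sum>x\<in>B. f x *s x)"
    using P B(1) disj by (simp add: sum.union_disjoint)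
  moreover have "(\<Sum>x\<in>b ` P. f x *s x) = 0" using coeff_b by (simp add: sum.neutral)
  ultimately have "(\<Sum>x\<in>B. f x *s x) = 0" using sum0 by simp
  then show "f x = 0"
    using \<open>x \<in> b ` P \<union> B\<close> coeff_b independentD[OF B(2) B(1)] by auto
qed

lemma dim_span_Un_dual_family:
  fixes s :: "'a \<Rightarrow> 'c::ab_group_add \<Rightarrow> 'c"
  assumes P: "finite P" and I: "finite C" "I \<subseteq> span C"
    and L: "\<And>p. p \<in> P \<Longrightarrow> Vector_Spaces.linear scale s (L p)"
    and L_I: "\<And>p x. p \<in> P \<Longrightarrow> x \<in> I \<Longrightarrow> L p x = 0"
    and L_b: "\<And>p q. p \<in> P \<Longrightarrow> q \<in> P \<Longrightarrow> L p (b q) = 0 \<longleftrightarrow> p \<noteq> q"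
  shows "dim (span (b ` P \<union> I)) = card P + dim I"
proof -
  obtain B where B: "B \<subseteq> I" "independent B" "I \<subseteq> span B" "card B = dim I"
    by (rule basis_exists)
  have "B \<subseteq> span C" using B(1) I(2) by (rule subset_trans)
  then have "finite B" using independent_span_bound[OF I(1) B(2)] by simp
  have "inj_on b P"
  proof (rule inj_onI)
    fix p q assume "p \<in> P" "q \<in> P" "b p = b q"
    then show "p = q" using L_b[of p p] L_b[of p q] by auto
  qed
  have disj: "b ` P \<inter> B = {}" using L_I L_b B(1) by (rule dual_family_disjoint)
  have span_eq: "span (b ` P \<union> B) = span (b ` P \<union> I)"
  proof -
    have "b ` P \<union> B \<subseteq> b ` P \<union> I" using B(1) by auto
    then have "b ` P \<union> B \<subseteq> span (b ` P \<union> I)" using span_superset by (rule subset_trans)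
    moreover have "span B \<subseteq> span (b ` P \<union> B)" by (rule span_mono) simp
    then have "I \<subseteq> span (b ` P \<union> B)" using B(3) by (rule subset_trans[rotated])
    moreover have "b ` P \<subseteq> span (b ` P \<union> B)" using span_superset[of "b ` P \<union> B"] by auto
    ultimately show ?thesis by (simp add: span_eq)
  qed
  have "independent (b ` P \<union> B)"
    by (rule independent_Un_dual_family[OF P \<open>finite B\<close> B(2,1) L L_I L_b])
  then have "dim (span (b ` P \<union> I)) = card (b ` P \<union> B)"
    by (simp flip: span_eq add: dim_eq_card_independent)
  also have "\<dots> = card P + dim I"
    using P \<open>finite B\<close> disj \<open>inj_on b P\<close> B(4) by (simp add: card_Un_disjoint card_image)
  finally show ?thesis .
qed

end

section \<open>Exterior algebra on coefficient functions\<close>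

interpretation V: vector_space qscale
  by unfold_locales (auto simp: qscale_def fun_eq_iff algebra_simps)

lemma qscale_apply[simp]: "qscale c f U = c * f U" by (simp add: qscale_def)

lemma span_qscale_iff: "c \<noteq> 0 \<Longrightarrow> qscale c x \<in> V.span X \<longleftrightarrow> x \<in> V.span X"
proof
  assume "c \<noteq> 0" "qscale c x \<in> V.span X"
  then have "qscale (inverse c) (qscale c x) \<in> V.span X" using V.span_scale by blast
  then show "x \<in> V.span X" using \<open>c \<noteq> 0\<close> by (simp add: V.scale_scale)
qed (rule V.span_scale)

lemma gensI: "i \<in> {1..n} \<Longrightarrow> j \<in> {1..n} \<Longrightarrow> i \<noteq> j \<Longrightarrow> (i, j) \<in> gens n"
  by (auto simp: gens_def)

lemma finite_gens: "finite (gens n)"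
  by (rule finite_subset[of _ "{1..n} \<times> {1..n}"]) (auto simp: gens_def)

definition inversions :: "gen set \<Rightarrow> gen set \<Rightarrow> (gen \<times> gen) set" where
  "inversions A B = {(s, t). s \<in> A \<and> t \<in> B \<and> t < s}"

lemma wsign_inversions: "wsign A B = (-1) ^ card (inversions A B)"
  by (simp add: wsign_def inversions_def)

lemma finite_inversions[intro]: "finite A \<Longrightarrow> finite B \<Longrightarrow> finite (inversions A B)"
  by (rule finite_subset[of _ "A \<times> B"]) (auto simp: inversions_def)

lemma wsign_square[simp]: "wsign A B * wsign A B = 1"
  by (simp add: wsign_def power_mult_distrib[symmetric] flip: power_add mult_2)

lemma wsign_nonzero[simp]: "wsign A B \<noteq> 0"
  by (simp add: wsign_def)

lemma wsign_empty_left[simp]: "wsign {} B = 1" and wsign_empty_right[simp]: "wsign A {} = 1"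
  by (simp_all add: wsign_def)

lemma wsign_Un_left:
  assumes "finite A" "finite B" "finite C" "A \<inter> B = {}"
  shows "wsign (A \<union> B) C = wsign A C * wsign B C"
proof -
  have "inversions (A \<union> B) C = inversions A C \<union> inversions B C" by (auto simp: inversions_def)
  moreover have "inversions A C \<inter> inversions B C = {}" using assms(4) by (auto simp: inversions_def)
  ultimately have "card (inversions (A \<union> B) C) = card (inversions A C) + card (inversions B C)"
    using assms by (simp add: card_Un_disjoint finite_inversions)
  thus ?thesis by (simp add: wsign_inversions power_add)
qed

lemma wsign_Un_right:
  assumes "finite A" "finite B" "finite C" "B \<inter> C = {}"
  shows "wsign A (B \<union> C) = wsign A B * wsign A C"
proof -
  have "inversions A (B \<union> C) = inversions A B \<union> inversions A C" by (auto simp: inversions_def)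
  moreover have "inversions A B \<inter> inversions A C = {}" using assms(4) by (auto simp: inversions_def)
  ultimately have "card (inversions A (B \<union> C)) = card (inversions A B) + card (inversions A C)"
    using assms by (simp add: card_Un_disjoint finite_inversions)
  thus ?thesis by (simp add: wsign_inversions power_add)
qed

lemma wedge_infinite: "infinite U \<Longrightarrow> wedge f g U = 0"
  by (simp add: wedge_def)

lemma wedge_add_left: "wedge (f + g) h = wedge f h + wedge g h"
  by (simp add: wedge_def fun_eq_iff algebra_simps sum.distrib)
lemma wedge_add_right: "wedge f (g + h) = wedge f g + wedge f h"
  by (simp add: wedge_def fun_eq_iff algebra_simps sum.distrib)
lemma wedge_scale_left: "wedge (qscale c f) h = qscale c (wedge f h)"
  by (simp add: wedge_def fun_eq_iff algebra_simps sum_distrib_left)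
lemma wedge_scale_right: "wedge f (qscale c h) = qscale c (wedge f h)"
  by (simp add: wedge_def fun_eq_iff algebra_simps sum_distrib_left)
lemma wedge_zero_left[simp]: "wedge 0 h = 0"
  by (simp add: wedge_def fun_eq_iff)
lemma wedge_zero_right[simp]: "wedge f 0 = 0"
  by (simp add: wedge_def fun_eq_iff)
lemma wedge_diff_right: "wedge f (g - h) = wedge f g - wedge f h"
  by (simp add: wedge_def fun_eq_iff algebra_simps sum_subtractf)
lemma wedge_uminus_left: "wedge (- f) h = - wedge f h"
  by (simp add: wedge_def fun_eq_iff sum_negf)
lemma wedge_sum_left: "wedge (\<Sum>i\<in>I. F i) h = (\<Sum>i\<in>I. wedge (F i) h)"
proof (induction I rule: infinite_finite_induct)
  case (infinite A) thus ?case by (metis sum.infinite wedge_zero_left)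
next case empty thus ?case by (metis sum.empty wedge_zero_left)
next case (insert x A) thus ?case by (metis sum.insert wedge_add_left)
qed
lemma wedge_sum_right: "wedge h (\<Sum>i\<in>I. F i) = (\<Sum>i\<in>I. wedge h (F i))"
proof (induction I rule: infinite_finite_induct)
  case (infinite A) thus ?case by (metis sum.infinite wedge_zero_right)
next case empty thus ?case by (metis sum.empty wedge_zero_right)
next case (insert x A) thus ?case by (metis sum.insert wedge_add_right)
qed

lemma wedge_mono_mono:
  assumes "finite A" "finite B"
  shows "wedge (mono A) (mono B) = (if A \<inter> B = {} then qscale (wsign A B) (mono (A \<union> B)) else 0)"
proof (rule ext)
  fix U
  show "wedge (mono A) (mono B) U = (if A \<inter> B = {} then qscale (wsign A B) (mono (A \<union> B)) else 0) U"
  proof (cases "finite U")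
    case False
    then have "U \<noteq> A \<union> B" using assms by auto
    then show ?thesis using False by (simp add: wedge_infinite mono_def)
  next
    case True
    have "wedge (mono A) (mono B) U = (\<Sum>S\<in>Pow U. if S = A then wsign S (U - S) * mono B (U - S) else
        0)"
      unfolding wedge_def by (rule sum.cong) (auto simp: mono_def)
    also have "\<dots> = (if A \<subseteq> U then wsign A (U - A) * mono B (U - A) else 0)"
      using True by (simp add: sum.delta')
    also have "\<dots> = (if A \<inter> B = {} then qscale (wsign A B) (mono (A \<union> B)) else 0) U"
      by (auto simp: mono_def)
    finally show ?thesis .
  qed
qed

lemma wedge_assoc: "wedge (wedge f g) h = wedge f (wedge g h)"
proof (rule ext)
  fix U
  show "wedge (wedge f g) h U = wedge f (wedge g h) U"
  proof (cases "finite U")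
    case False then show ?thesis by (simp add: wedge_infinite)
  next
    case fin: True
    have "wedge (wedge f g) h U =
      (\<Sum>S\<in>Pow U. \<Sum>R\<in>Pow S. wsign S (U - S) * wsign R (S - R) * f R * g (S - R) * h (U - S))"
      unfolding wedge_def by (simp add: sum_distrib_left sum_distrib_right mult.assoc
        mult.left_commute)
    also have "\<dots> = (\<Sum>(S,R)\<in>Sigma (Pow U) Pow. wsign S (U - S) * wsign R (S - R) * f R * g (S - R) *
        h (U - S))"
      using fin by (subst sum.Sigma) (auto intro: finite_subset)
    also have "\<dots> = (\<Sum>(R,T)\<in>Sigma (Pow U) (\<lambda>R. Pow (U - R)). wsign R (U - R) * wsign T (U - R - T) *
        f R * g T * h (U - R - T))"
    proof (rule sum.reindex_bij_witness[where i = "\<lambda>(R,T). (R \<union> T, R)"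
      and j = "\<lambda>(S,R). (R, S - R)"])
      fix a assume a: "a \<in> Sigma (Pow U) Pow"
      obtain S R where aa: "a = (S, R)" by fastforce
      have RS: "R \<subseteq> S" "S \<subseteq> U" using a aa by auto
      have fR: "finite R" "finite (S - R)" "finite (U - S)" using RS fin
        by (auto intro: finite_subset)
      have e1: "U - R - (S - R) = U - S" using RS by auto
      have e2: "U - R = (S - R) \<union> (U - S)" using RS by auto
      have e3: "S = R \<union> (S - R)" using RS by auto
      have "wsign S (U - S) = wsign R (U - S) * wsign (S - R) (U - S)"
        using wsign_Un_left[of R "S - R" "U - S"] fR e3 by auto
      moreover have "wsign R (U - R) = wsign R (S - R) * wsign R (U - S)"
        using wsign_Un_right[of R "S - R" "U - S"] fR e2 by auto
      ultimately show "(case (case a of (S, R) \<Rightarrow> (R, S - R)) of (R, T) \<Rightarrow> wsign R (U - R) * wsign T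
          (U - R - T) * f R * g T * h (U - R - T)) =
         (case a of (S, R) \<Rightarrow> wsign S (U - S) * wsign R (S - R) * f R * g (S - R) * h (U - S))"
        using aa e1 by (simp add: algebra_simps)
    qed (auto intro: finite_subset)
    also have "\<dots> = (\<Sum>R\<in>Pow U. \<Sum>T\<in>Pow (U - R). wsign R (U - R) * wsign T (U - R - T) * f R * g T * h
        (U - R - T))"
      using fin by (subst sum.Sigma) (auto intro: finite_subset)
    also have "\<dots> = wedge f (wedge g h) U"
      unfolding wedge_def by (simp add: sum_distrib_left sum_distrib_right mult.assoc
        mult.left_commute)
    finally show ?thesis .
  qed
qed

definition finitely_supported :: "ext \<Rightarrow> bool" where
  "finitely_supported f \<longleftrightarrow> (\<forall>U. infinite U \<longrightarrow> f U = 0)"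

definition degree_one :: "ext \<Rightarrow> bool" where
  "degree_one f \<longleftrightarrow> (\<forall>U. f U \<noteq> 0 \<longrightarrow> card U = 1)"

lemma finitely_supported_wedge[simp]: "finitely_supported (wedge f g)"
  by (simp add: finitely_supported_def wedge_infinite)
lemma finitely_supported_mono[simp]: "finite S \<Longrightarrow> finitely_supported (mono S)"
  by (auto simp: finitely_supported_def mono_def)
lemma degree_one_finitely_supported: "degree_one f \<Longrightarrow> finitely_supported f"
  by (auto simp: finitely_supported_def degree_one_def)

lemma wedge_one_left: "finitely_supported f \<Longrightarrow> wedge (mono {}) f = f"
proof (rule ext)
  fix U assume "finitely_supported f"
  show "wedge (mono {}) f U = f U"
  proof (cases "finite U")
    case True
    have "wedge (mono {}) f U = (\<Sum>S\<in>Pow U. if S = {} then wsign S (U - S) * f (U - S) else 0)"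
      unfolding wedge_def by (rule sum.cong) (auto simp: mono_def)
    also have "\<dots> = f U" using True by (simp add: sum.delta')
    finally show ?thesis .
  qed (use \<open>finitely_supported f\<close> in \<open>auto simp: finitely_supported_def wedge_infinite\<close>)
qed

lemma wedge_one_right: "finitely_supported f \<Longrightarrow> wedge f (mono {}) = f"
proof (rule ext)
  fix U assume "finitely_supported f"
  show "wedge f (mono {}) U = f U"
  proof (cases "finite U")
    case True
    have "wedge f (mono {}) U = (\<Sum>S\<in>Pow U. if S = U then wsign S (U - S) * f S else 0)"
      unfolding wedge_def by (rule sum.cong) (auto simp: mono_def)
    also have "\<dots> = f U" using True by (simp add: sum.delta')
    finally show ?thesis .
  qed (use \<open>finitely_supported f\<close> in \<open>auto simp: finitely_supported_def wedge_infinite\<close>)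
qed

lemma wsign_singletons: "wsign {s} {t} = (if t < s then -1 else 1)"
proof -
  have "{(a, b). a \<in> {s} \<and> b \<in> {t} \<and> b < a} = (if t < s then {(s,t)} else {})" by auto
  thus ?thesis by (simp add: wsign_def)
qed

lemma wsign_singletons_swap: "s \<noteq> t \<Longrightarrow> wsign {s} {t} = - wsign {t} {s}"
  by (auto simp: wsign_singletons)

lemma wedge_anticommute:
  assumes "degree_one x" "degree_one y"
  shows "wedge x y = - wedge y x"
proof (rule ext)
  fix U
  show "wedge x y U = (- wedge y x) U"
  proof (cases "finite U")
    case False then show ?thesis by (simp add: wedge_infinite)
  next
    case fin: True
    have "wedge y x U = (\<Sum>S\<in>Pow U. wsign (U - S) (U - (U - S)) * y (U - S) * x (U - (U - S)))"
      unfolding wedge_def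
      by (rule sum.reindex_bij_witness[where i = "\<lambda>S. U - S"
        and j = "\<lambda>S. U - S"]) (auto simp: Diff_Diff_Int Int_absorb1)
    also have "\<dots> = (\<Sum>S\<in>Pow U. - (wsign S (U - S) * x S * y (U - S)))"
    proof (rule sum.cong[OF refl])
      fix S assume S: "S \<in> Pow U"
      have e: "U - (U - S) = S" using S by auto
      show "wsign (U - S) (U - (U - S)) * y (U - S) * x (U - (U - S)) = - (wsign S (U - S) * x S * y
          (U - S))"
      proof (cases "x S \<noteq> 0 \<and> y (U - S) \<noteq> 0")
        case True
        have c1: "card S = 1" using True assms(1) by (simp add: degree_one_def)
        have c2: "card (U - S) = 1" using True assms(2) by (simp add: degree_one_def)
        obtain s where s: "S = {s}" using c1 card_1_singletonE by blast
        obtain t where t: "U - S = {t}" using c2 card_1_singletonE by blast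
        note st = s t
        then have "s \<noteq> t" by auto
        then show ?thesis unfolding e using st wsign_singletons_swap[of t s] by simp
      qed (auto simp: e)
    qed
    also have "\<dots> = - wedge x y U" by (simp add: wedge_def sum_negf)
    finally show ?thesis by simp
  qed
qed

lemma wedge_self:
  assumes "degree_one x"
  shows "wedge x x = 0"
proof -
  have "wedge x x = - wedge x x" using wedge_anticommute[OF assms assms] .
  then have "\<And>U. wedge x x U = - wedge x x U" by (metis uminus_apply)
  then show ?thesis by (simp add: fun_eq_iff)
qed

lemma degree_one_add:
  assumes "degree_one x" "degree_one y"
  shows "degree_one (x + y)"
  unfolding degree_one_def
proof (intro allI impI)
  fix U assume "(x + y) U \<noteq> 0" then have "x U \<noteq> 0 \<or> y U \<noteq> 0" by auto
  then show "card U = 1" using assms unfolding degree_one_def by blast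
qed
lemma degree_one_zero[simp]: "degree_one 0" by (auto simp: degree_one_def)
lemma degree_one_mono[simp]: "degree_one (mono {e})" by (auto simp: degree_one_def mono_def)
lemma degree_one_sum: "(\<And>i. i \<in> I \<Longrightarrow> degree_one (F i)) \<Longrightarrow> degree_one (\<Sum>i\<in>I. F i)"
  by (induction I rule: infinite_finite_induct) (auto intro: degree_one_add)

lemma degree_one_r: "degree_one (r a b)" by (simp add: r_def)

lemma wedge_r_swap: "wedge (r a b) (wedge (r c d) f) = - wedge (r c d) (wedge (r a b) f)"
  by (simp flip: wedge_assoc add: wedge_anticommute[OF degree_one_r degree_one_r, of a b c d]
    wedge_uminus_left)

lemma wedge_r_mono:
  assumes "finite S" "(a, b) \<notin> S"
  shows "wedge (r a b) (mono S) = qscale (wsign {(a, b)} S) (mono (insert (a, b) S))"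
  using assms by (simp add: r_def wedge_mono_mono)

lemma wedge_r_mono_member:
  assumes "finite S" "(a, b) \<in> S"
  shows "wedge (r a b) (mono S) = 0"
  using assms by (simp add: r_def wedge_mono_mono)

lemma mono_insert:
  assumes "finite S" "(a, b) \<notin> S"
  shows "mono (insert (a, b) S) = qscale (wsign {(a, b)} S) (wedge (r a b) (mono S))"
  using wedge_r_mono[OF assms] by (simp add: V.scale_scale)

lemma wedge_mono_r_r:
  assumes "finite A"
  shows "\<exists>c. wedge (mono A) (wedge (r a b) (r a' b')) = qscale c (mono (insert (a, b) (insert (a', b') A)))
    \<and> (c \<noteq> 0 \<longleftrightarrow> ((a, b) \<noteq> (a', b') \<and> (a, b) \<notin> A \<and> (a', b') \<notin> A))"
proof (cases "(a, b) \<noteq> (a', b') \<and> (a, b) \<notin> A \<and> (a', b') \<notin> A")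
  case True
  have e: "A \<union> {(a, b), (a', b')} = insert (a, b) (insert (a', b') A)" by auto
  have "wedge (mono A) (wedge (r a b) (r a' b')) =
      qscale (wsign {(a, b)} {(a', b')} * wsign A {(a, b), (a', b')}) (mono (insert (a, b) (insert
          (a', b') A)))"
    using True assms by (simp add: r_def wedge_mono_mono wedge_scale_right V.scale_scale e
      insert_commute mult.commute)
  then show ?thesis using True
    by (intro exI[of _ "wsign {(a, b)} {(a', b')} * wsign A {(a, b), (a', b')}"]) simp
next
  case False
  then have "wedge (mono A) (wedge (r a b) (r a' b')) = 0"
    using assms by (auto simp: r_def wedge_mono_mono wedge_scale_right)
  then show ?thesis using False by (intro exI[of _ 0]) simp
qed

lemma wedge_in_span_left:
  assumes "\<And>x. x \<in> S \<Longrightarrow> wedge x h \<in> V.span T" "y \<in> V.span S"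
  shows "wedge y h \<in> V.span T"
  using assms(2)
proof (induction rule: V.span_induct)
  case base
  show ?case unfolding V.subspace_def
    by (auto simp: wedge_add_left wedge_scale_left intro: V.span_zero V.span_add V.span_scale)
next
  case (step x) then show ?case using assms(1) by blast
qed

lemma wedge_in_span_right:
  assumes "\<And>x. x \<in> S \<Longrightarrow> wedge h x \<in> V.span T" "y \<in> V.span S"
  shows "wedge h y \<in> V.span T"
  using assms(2)
proof (induction rule: V.span_induct)
  case base
  show ?case unfolding V.subspace_def
    by (auto simp: wedge_add_right wedge_scale_right intro: V.span_zero V.span_add V.span_scale)
next
  case (step x) then show ?case using assms(1) by blast
qed

section \<open>Ordered products and algebra maps\<close>

definition ordered_wedge :: "(gen \<Rightarrow> ext) \<Rightarrow> gen set \<Rightarrow> ext" where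
  "ordered_wedge x S = foldr (\<lambda>e acc. wedge (x e) acc) (sorted_list_of_set S) (mono {})"

lemma ordered_wedge_empty[simp]: "ordered_wedge x {} = mono {}" by (simp add: ordered_wedge_def)

lemma ordered_wedge_Min: assumes "finite S" "S \<noteq> {}"
  shows "ordered_wedge x S = wedge (x (Min S)) (ordered_wedge x (S - {Min S}))"
  using assms by (simp add: ordered_wedge_def sorted_list_of_set_nonempty)

lemma finitely_supported_ordered_wedge: "finite S \<Longrightarrow> finitely_supported (ordered_wedge x S)"
  by (cases "S = {}") (auto simp: ordered_wedge_Min)

lemma ordered_wedge_insert_Min: assumes "finite C" "\<forall>c\<in>C. a < c"
  shows "ordered_wedge x (insert a C) = wedge (x a) (ordered_wedge x C)"
proof -
  have aC: "a \<notin> C"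
  proof
    assume "a \<in> C" then have "a < a" using assms(2) by blast
    then show False by simp
  qed
  have m: "Min (insert a C) = a"
  proof (rule Min_eqI)
    show "finite (insert a C)" using assms by simp
    fix y assume "y \<in> insert a C" then show "a \<le> y" using assms(2) by (auto intro: less_imp_le)
  qed simp
  have i: "insert a C - {a} = C" using aC by simp
  show ?thesis using ordered_wedge_Min[of "insert a C" x] assms(1) unfolding m i by simp
qed

lemma wsign_singleton: "finite C \<Longrightarrow> wsign {a} C = (-1) ^ card {c \<in> C. c < a}"
proof -
  have "card {(s, t). s \<in> {a} \<and> t \<in> C \<and> t < s} = card {c \<in> C. c < a}"
    by (rule bij_betw_same_card[of snd]) (auto simp: bij_betw_def inj_on_def image_def)
  thus ?thesis by (simp add: wsign_def)
qed

lemma wedge_ordered_wedge_single: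
  assumes d: "\<And>e. degree_one (x e)" and "finite C"
  shows "wedge (x a) (ordered_wedge x C)
    = (if a \<in> C then 0 else qscale (wsign {a} C) (ordered_wedge x (insert a C)))"
  using assms(2)
proof (induction "card C" arbitrary: C rule: less_induct)
  case less
  show ?case
  proof (cases "C = {}")
    case True
    then show ?thesis using d degree_one_finitely_supported[OF d[of a]]
      by (simp add: wedge_one_right ordered_wedge_insert_Min[of "{}" a x, simplified]
        wedge_one_right)
  next
    case False
    define c where "c = Min C"
    define C' where "C' = C - {c}"
    have cC: "c \<in> C" using False less.prems c_def by auto
    have PC: "ordered_wedge x C = wedge (x c) (ordered_wedge x C')"
      using ordered_wedge_Min[OF less.prems False] c_def C'_def by simp
    have cmin: "\<forall>d\<in>C'. c < d" using less.prems by (auto simp: C'_def c_def less_le)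
    have fC': "finite C'" using less.prems by (simp add: C'_def)
    have cardC': "card C' < card C" unfolding C'_def using card_Diff1_less[OF less.prems cC] .
    consider "a < c" | "a = c" | "c < a" by fastforce
    then show ?thesis
    proof cases
      case 1
      have ad: "\<forall>d\<in>C. a < d" using 1 Min_le[OF less.prems] c_def by (meson less_le_trans)
      then have "a \<notin> C" by (meson less_irrefl)
      note this ad
      moreover have "wsign {a} C = 1" using calculation less.prems
      proof -
        have e: "{c \<in> C. c < a} = {}" using ad by (auto dest: less_asym)
        show ?thesis by (subst wsign_singleton[OF less.prems]) (simp only: e card.empty power_0)
      qed
      ultimately show ?thesis using ordered_wedge_insert_Min[OF less.prems, of a x] by simp
    next
      case 2
      then show ?thesis using PC cC by (simp flip: wedge_assoc add: wedge_self[OF d])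
    next
      case 3
      have "wedge (x a) (ordered_wedge x C) = wedge (wedge (x a) (x c)) (ordered_wedge x C')"
        using PC by (simp add: wedge_assoc)
      also have "\<dots> = - wedge (x c) (wedge (x a) (ordered_wedge x C'))"
        by (simp add: wedge_anticommute[OF d[of a] d[of c]] wedge_uminus_left wedge_assoc)
      finally have E: "wedge (x a) (ordered_wedge x C) = - wedge (x c) (wedge (x a) (ordered_wedge x
          C'))" .
      note IH = less.hyps[OF cardC' fC']
      show ?thesis
      proof (cases "a \<in> C")
        case True
        then have "a \<in> C'" using 3 by (auto simp: C'_def)
        then show ?thesis using E IH True by simp
      next
        case False
        then have aC': "a \<notin> C'" by (auto simp: C'_def)
        have m: "\<forall>d\<in>insert a C'. c < d" using cmin 3 by auto
        have ins: "insert a C = insert c (insert a C')" using cC by (auto simp: C'_def)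
        have "C = {c} \<union> C'" using cC by (auto simp: C'_def)
        then have "wsign {a} C = wsign {a} ({c} \<union> C')" by simp
        also have "\<dots> = wsign {a} {c} * wsign {a} C'"
          using fC' by (subst wsign_Un_right) (auto simp: C'_def)
        also have "\<dots> = - wsign {a} C'" using 3 by (simp add: wsign_singletons)
        finally have ws: "wsign {a} C = - wsign {a} C'" .
        show ?thesis using E IH aC' False ws
          by (simp add: wedge_scale_right ins ordered_wedge_insert_Min[OF _ m] fC')
      qed
    qed
  qed
qed

lemma wedge_ordered_wedge:
  assumes d: "\<And>e. degree_one (x e)" and fA: "finite A" and fB: "finite B"
  shows "wedge (ordered_wedge x A) (ordered_wedge x B)
    = (if A \<inter> B = {} then qscale (wsign A B) (ordered_wedge x (A \<union> B)) else 0)"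
  using fA
proof (induction "card A" arbitrary: A rule: less_induct)
  case less
  show ?case
  proof (cases "A = {}")
    case True
    then show ?thesis using finitely_supported_ordered_wedge[OF fB] by (simp add: wedge_one_left)
  next
    case False
    define a where "a = Min A"
    define A' where "A' = A - {a}"
    have aA: "a \<in> A" using False less.prems a_def by auto
    have PA: "ordered_wedge x A = wedge (x a) (ordered_wedge x A')"
      using ordered_wedge_Min[OF less.prems False] a_def A'_def by simp
    have amin: "\<forall>d\<in>A'. a < d" using less.prems by (auto simp: A'_def a_def less_le)
    have fA': "finite A'" using less.prems by (simp add: A'_def)
    have cardA': "card A' < card A" unfolding A'_def using card_Diff1_less[OF less.prems aA] .
    note IH = less.hyps[OF cardA' fA']
    have E: "wedge (ordered_wedge x A) (ordered_wedge x B) = wedge (x a) (wedge (ordered_wedge x A')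
        (ordered_wedge x B))"
      using PA by (simp add: wedge_assoc)
    show ?thesis
    proof (cases "A' \<inter> B = {}")
      case False
      then have "A \<inter> B \<noteq> {}" by (auto simp: A'_def)
      then show ?thesis using E IH False by simp
    next
      case True
      have E2: "wedge (ordered_wedge x A) (ordered_wedge x B) = qscale (wsign A' B) (wedge (x a)
          (ordered_wedge x (A' \<union> B)))"
        using E IH True by (simp add: wedge_scale_right)
      show ?thesis
      proof (cases "a \<in> B")
        case True
        have "A \<inter> B \<noteq> {}" using True aA by auto
        moreover have "wedge (x a) (ordered_wedge x (A' \<union> B)) = 0"
          by (subst wedge_ordered_wedge_single[OF d]) (use fA' fB True in auto)
        ultimately show ?thesis using E2 by simp
      next
        case aB: False
        have aA': "a \<notin> A'" by (simp add: A'_def)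
        have Aeq: "A = {a} \<union> A'" using aA by (auto simp: A'_def)
        have ws1: "wsign A B = wsign {a} B * wsign A' B"
        proof -
          have "wsign A B = wsign ({a} \<union> A') B" using Aeq by simp
          also have "\<dots> = wsign {a} B * wsign A' B" using fA' fB aA' by (intro wsign_Un_left) auto
          finally show ?thesis .
        qed
        have ws2: "wsign {a} (A' \<union> B) = wsign {a} A' * wsign {a} B"
          using fA' fB True by (simp add: wsign_Un_right)
        have e: "{c \<in> A'. c < a} = {}" using amin by (auto dest: less_asym)
        have ws3: "wsign {a} A' = 1"
          by (subst wsign_singleton[OF fA']) (simp only: e card.empty power_0)
        have ins: "insert a (A' \<union> B) = A \<union> B" using Aeq by auto
        have "A \<inter> B = {}" using True aB Aeq by auto
        then show ?thesis using E2 wedge_ordered_wedge_single[OF d, where C = "A' \<union> B"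
          and a = a] fA' fB aA' aB ws1 ws2 ws3 ins
          by (simp add: qscale_def fun_eq_iff mult.commute)
      qed
    qed
  qed
qed

lemma ordered_wedge_eq_0: "finite S \<Longrightarrow> e \<in> S \<Longrightarrow> x e = 0 \<Longrightarrow> ordered_wedge x S = 0"
proof (induction "card S" arbitrary: S rule: less_induct)
  case less
  have ne: "S \<noteq> {}" using less.prems by auto
  define m where "m = Min S"
  have mS: "m \<in> S" using ne less.prems m_def by auto
  have P: "ordered_wedge x S = wedge (x m) (ordered_wedge x (S - {m}))"
    using ordered_wedge_Min[OF less.prems(1) ne] m_def by simp
  show ?case
  proof (cases "e = m")
    case True then show ?thesis using P less.prems by simp
  next
    case False
    then have "ordered_wedge x (S - {m}) = 0"
      using less.hyps[OF card_Diff1_less[OF less.prems(1) mS]] less.prems mS by simp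
    then show ?thesis using P by simp
  qed
qed

lemma ordered_wedge_of_monomials:
  assumes "finite S" "inj_on g S" "\<And>e. e \<in> S \<Longrightarrow> x e = mono {g e}"
  shows "\<exists>c. c \<noteq> 0 \<and> ordered_wedge x S = qscale c (mono (g ` S))"
  using assms
proof (induction "card S" arbitrary: S rule: less_induct)
  case less
  show ?case
  proof (cases "S = {}")
    case True then show ?thesis by (intro exI[of _ 1]) (simp add: qscale_def)
  next
    case False
    define m where "m = Min S"
    have mS: "m \<in> S" using False less.prems m_def by auto
    have h1: "finite (S - {m})" using less.prems(1) by simp
    have h2: "inj_on g (S - {m})" using less.prems(2) by (rule inj_on_diff)
    have h3: "\<And>e. e \<in> S - {m} \<Longrightarrow> x e = mono {g e}" using less.prems(3) by simp
    obtain c where c: "c \<noteq> 0" "ordered_wedge x (S - {m}) = qscale c (mono (g ` (S - {m})))"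
      using less.hyps[OF card_Diff1_less[OF less.prems(1) mS] h1 h2 h3] by blast
    have gm: "g m \<notin> g ` (S - {m})" using less.prems(2) mS by (auto simp: inj_on_def)
    have "ordered_wedge x S = wedge (mono {g m}) (qscale c (mono (g ` (S - {m}))))"
      using ordered_wedge_Min[OF less.prems(1) False] m_def c less.prems(3)[OF mS] by simp
    also have "\<dots> = qscale c (wedge (mono {g m}) (mono (g ` (S - {m}))))"
      by (simp add: wedge_scale_right)
    also have "\<dots> = qscale c (qscale (wsign {g m} (g ` (S - {m}))) (mono (insert (g m) (g ` (S -
        {m})))))"
      using gm less.prems(1) by (simp add: wedge_mono_mono)
    also have "insert (g m) (g ` (S - {m})) = g ` S" using mS by auto
    also have "qscale c (qscale (wsign {g m} (g ` (S - {m}))) (mono (g ` S))) = qscale (c * wsign {g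
        m} (g ` (S - {m}))) (mono (g ` S))"
      by (simp add: qscale_def fun_eq_iff)
    finally show ?thesis using c by (intro exI[of _ "c * wsign {g m} (g ` (S - {m}))"]) simp
  qed
qed

definition ext_extend :: "(gen \<Rightarrow> ext) \<Rightarrow> gen set \<Rightarrow> ext \<Rightarrow> ext" where
  "ext_extend x G f = (\<Sum>S\<in>Pow G. qscale (f S) (ordered_wedge x S))"

definition supported_on :: "gen set \<Rightarrow> ext \<Rightarrow> bool" where
  "supported_on G f \<longleftrightarrow> (\<forall>U. f U \<noteq> 0 \<longrightarrow> U \<subseteq> G)"

lemma ext_extend_add: "ext_extend x G (f + g) = ext_extend x G f + ext_extend x G g"
  by (simp add: ext_extend_def V.scale_left_distrib sum.distrib)
lemma ext_extend_scale: "ext_extend x G (qscale c f) = qscale c (ext_extend x G f)"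
  by (simp add: ext_extend_def V.scale_sum_right V.scale_scale)
lemma ext_extend_zero: "ext_extend x G 0 = 0" by (simp add: ext_extend_def)
lemma ext_extend_diff: "ext_extend x G (f - g) = ext_extend x G f - ext_extend x G g"
proof -
  have "ext_extend x G (f - g) + ext_extend x G g = ext_extend x G f" by (simp flip: ext_extend_add)
  then show ?thesis by (simp add: algebra_simps)
qed
lemma ext_extend_sum: "ext_extend x G (\<Sum>i\<in>I. F i) = (\<Sum>i\<in>I. ext_extend x G (F i))"
proof (induction I rule: infinite_finite_induct)
  case (infinite A) thus ?case by (metis sum.infinite ext_extend_zero)
next case empty thus ?case by (metis sum.empty ext_extend_zero)
next case (insert y A) thus ?case by (metis sum.insert ext_extend_add)
qed

lemma ext_extend_mono:
  assumes "finite G" "S \<subseteq> G"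
  shows "ext_extend x G (mono S) = ordered_wedge x S"
proof -
  have "ext_extend x G (mono S) = (\<Sum>T\<in>Pow G. if T = S then ordered_wedge x S else 0)"
    unfolding ext_extend_def by (rule sum.cong) (auto simp: mono_def)
  also have "\<dots> = ordered_wedge x S" using assms by (simp add: sum.delta')
  finally show ?thesis .
qed

lemma sum_fun_apply: "(\<Sum>i\<in>I. F i) U = (\<Sum>i\<in>I. (F i) U)"
  by (induction I rule: infinite_finite_induct) auto

lemma expand_monomials:
  assumes "finite G" "supported_on G f"
  shows "f = (\<Sum>S\<in>Pow G. qscale (f S) (mono S))"
proof (rule ext)
  fix U
  have "(\<Sum>S\<in>Pow G. qscale (f S) (mono S)) U = (\<Sum>S\<in>Pow G. if S = U then f U else 0)"
    by (simp add: sum_fun_apply) (rule sum.cong, auto simp: mono_def)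
  also have "\<dots> = f U" using assms by (auto simp: sum.delta' supported_on_def)
  finally show "f U = (\<Sum>S\<in>Pow G. qscale (f S) (mono S)) U" by simp
qed

lemma supported_on_wedge: "supported_on G f \<Longrightarrow> supported_on G g \<Longrightarrow> supported_on G (wedge f g)"
proof -
  assume a: "supported_on G f" "supported_on G g"
  show "supported_on G (wedge f g)" unfolding supported_on_def
  proof (intro allI impI)
    fix U assume "wedge f g U \<noteq> 0"
    then obtain S where "S \<subseteq> U" "f S \<noteq> 0" "g (U - S) \<noteq> 0" unfolding wedge_def
      by (metis (no_types, lifting) PowD mult_not_zero sum.neutral)
    then show "U \<subseteq> G" using a unfolding supported_on_def by blast
  qed
qed

lemma supported_on_mono: "S \<subseteq> G \<Longrightarrow> supported_on G (mono S)" by (auto simp: supported_on_def mono_def)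
lemma supported_on_diff:
  assumes "supported_on G f" "supported_on G g"
  shows "supported_on G (f - g)"
  unfolding supported_on_def
proof (intro allI impI)
  fix U assume "(f - g) U \<noteq> 0" then have "f U \<noteq> 0 \<or> g U \<noteq> 0" by auto
  then show "U \<subseteq> G" using assms unfolding supported_on_def by blast
qed
lemma ext_extend_wedge:
  assumes G: "finite G" and d: "\<And>e. degree_one (x e)" and f: "supported_on G f"
    and g: "supported_on G g"
  shows "ext_extend x G (wedge f g) = wedge (ext_extend x G f) (ext_extend x G g)"
proof -
  have key: "ext_extend x G (wedge (mono S) (mono T)) = wedge (ordered_wedge x S) (ordered_wedge x
      T)" if "S \<subseteq> G" "T \<subseteq> G" for S T
  proof -
    have fin: "finite S" "finite T" using that G finite_subset by auto
    show ?thesis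
      using that G fin by (simp add: wedge_mono_mono wedge_ordered_wedge[OF d] ext_extend_scale
        ext_extend_mono ext_extend_zero)
  qed
  have "wedge f g = wedge (\<Sum>S\<in>Pow G. qscale (f S) (mono S)) (\<Sum>T\<in>Pow G. qscale (g T) (mono T))"
    using expand_monomials[OF G f] expand_monomials[OF G g] by simp
  also have "\<dots> = (\<Sum>S\<in>Pow G. \<Sum>T\<in>Pow G. qscale (f S * g T) (wedge (mono S) (mono T)))"
    by (simp add: wedge_sum_left wedge_sum_right wedge_scale_left wedge_scale_right
      V.scale_sum_right V.scale_scale mult.commute)
       (rule sum.swap)
  finally have "ext_extend x G (wedge f g) = (\<Sum>S\<in>Pow G. \<Sum>T\<in>Pow G. qscale (f S * g T) (wedge
      (ordered_wedge x S) (ordered_wedge x T)))"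
    by (simp add: ext_extend_sum ext_extend_scale key)
  also have "\<dots> = wedge (\<Sum>S\<in>Pow G. qscale (f S) (ordered_wedge x S)) (\<Sum>T\<in>Pow G. qscale (g T)
      (ordered_wedge x T))"
    by (simp add: wedge_sum_left wedge_sum_right wedge_scale_left wedge_scale_right
      V.scale_sum_right V.scale_scale mult.commute)
       (rule sum.swap)
  finally show ?thesis by (simp add: ext_extend_def)
qed

lemma linear_ext_extend: "Vector_Spaces.linear qscale qscale (ext_extend x G)"
  by (rule linear_module_homI, unfold_locales) (simp_all add: ext_extend_add ext_extend_scale)

lemma ordered_wedge_singleton: "degree_one (x e) \<Longrightarrow> ordered_wedge x {e} = x e"
  by (simp add: ordered_wedge_Min wedge_one_right degree_one_finitely_supported)

lemma ext_extend_r: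
  "finite G \<Longrightarrow> (i, j) \<in> G \<Longrightarrow> degree_one (x (i, j)) \<Longrightarrow> ext_extend x G (r i j) = x (i, j)"
  by (simp add: r_def ext_extend_mono ordered_wedge_singleton)

lemma ext_extend_r_r:
  assumes "finite G" "(i, j) \<in> G" "(k, l) \<in> G" "\<And>e. degree_one (x e)"
  shows "ext_extend x G (wedge (r i j) (r k l)) = wedge (x (i, j)) (x (k, l))"
  using assms by (simp add: ext_extend_wedge supported_on_mono r_def ext_extend_r[unfolded r_def])

section \<open>Lah partitions and their edges\<close>

lemma split_list_at_member:
  assumes "b \<in> set ys"
  obtains "ys = [b]" | ys0 y where "ys = ys0 @ [y]" "b \<in> set ys0" | y ys1
    where "ys = y # ys1" "b \<in> set ys1"
proof (cases "b \<in> set (butlast ys)")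
  case True
  moreover have "ys = butlast ys @ [last ys]" using assms by (cases ys rule: rev_cases) auto
  ultimately show ?thesis using that(2) by blast
next
  case False
  then have b: "b = last ys" using assms by (cases ys rule: rev_cases) auto
  show ?thesis
  proof (cases ys)
    case (Cons y ys1)
    then show ?thesis using that(1) that(3)[of y ys1] b by (cases "ys1 = []") auto
  qed (use assms in simp)
qed

definition lah_partition :: "nat \<Rightarrow> nat list set \<Rightarrow> bool" where
  "lah_partition n P \<longleftrightarrow> (\<forall>xs\<in>P. xs \<noteq> [] \<and> distinct xs) \<and>
     (\<forall>xs\<in>P. \<forall>ys\<in>P. xs \<noteq> ys \<longrightarrow> set xs \<inter> set ys = {}) \<and>
     (\<Union>xs\<in>P. set xs) = {1..n} \<and> finite P"

lemma lah_partitions_eq: "lah_partitions n m = {P. lah_partition n P \<and> card P = m}"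
  by (auto simp: lah_partitions_def lah_partition_def)

definition list_edges :: "nat list \<Rightarrow> gen set" where
  "list_edges xs = set (zip xs (tl xs))"

definition edges :: "nat list set \<Rightarrow> gen set" where
  "edges P = (\<Union>xs\<in>P. list_edges xs)"

definition singletons :: "nat list set \<Rightarrow> nat set" where
  "singletons P = {y. [y] \<in> P}"

lemma list_edges_Nil[simp]: "list_edges [] = {}" by (simp add: list_edges_def)
lemma list_edges_singleton[simp]: "list_edges [a] = {}" by (simp add: list_edges_def)
lemma list_edges_Cons_Cons[simp]: "list_edges (a # b # xs) = insert (a, b) (list_edges (b # xs))"
  by (simp add: list_edges_def)

lemma list_edges_append:
  "list_edges (xs @ ys)
    = list_edges xs \<union> list_edges ys \<union> (if xs = [] \<or> ys = [] then {} else {(last xs, hd ys)})"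
proof (induction xs)
  case (Cons a xs)
  then show ?case
    by (cases xs; cases ys) auto
qed simp

lemma list_edges_nth:
  "(a, b) \<in> list_edges xs \<longleftrightarrow> (\<exists>t. Suc t < length xs \<and> a = xs ! t \<and> b = xs ! Suc t)"
proof
  assume "(a, b) \<in> list_edges xs"
  then obtain i where "i < length xs - 1" "a = xs ! i" "b = tl xs ! i"
    by (auto simp: list_edges_def set_zip)
  then show "\<exists>t. Suc t < length xs \<and> a = xs ! t \<and> b = xs ! Suc t"
    by (intro exI[of _ i]) (auto simp: nth_tl)
next
  assume "\<exists>t. Suc t < length xs \<and> a = xs ! t \<and> b = xs ! Suc t"
  then obtain t where "Suc t < length xs" "a = xs ! t" "b = xs ! Suc t" by blast
  then show "(a, b) \<in> list_edges xs" unfolding list_edges_def set_zip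
    by (auto simp: nth_tl intro!: exI[of _ t])
qed

lemma list_edges_set: "(a, b) \<in> list_edges xs \<Longrightarrow> a \<in> set xs \<and> b \<in> set xs"
  by (auto simp: list_edges_nth)

lemma list_edges_neq: "distinct xs \<Longrightarrow> (a, b) \<in> list_edges xs \<Longrightarrow> a \<noteq> b"
  by (auto simp: list_edges_nth nth_eq_iff_index_eq)

lemma finite_list_edges[simp]: "finite (list_edges xs)" by (simp add: list_edges_def)

lemma card_list_edges: "distinct xs \<Longrightarrow> card (list_edges xs) = length xs - 1"
  unfolding list_edges_def by (simp add: distinct_card distinct_zipI1)

lemma edges_insert: "edges (insert xs P) = list_edges xs \<union> edges P" by (simp add: edges_def)
lemma edges_empty[simp]: "edges {} = {}" by (simp add: edges_def)

lemma lah_partitionD: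
  assumes "lah_partition n P"
  shows "\<And>xs. xs \<in> P \<Longrightarrow> xs \<noteq> []" "\<And>xs. xs \<in> P \<Longrightarrow> distinct xs"
    "\<And>xs ys. xs \<in> P \<Longrightarrow> ys \<in> P \<Longrightarrow> xs \<noteq> ys \<Longrightarrow> set xs \<inter> set ys = {}"
    "(\<Union>xs\<in>P. set xs) = {1..n}" "finite P"
  using assms by (auto simp: lah_partition_def)

lemma lah_partition_block_unique:
  "lah_partition n P \<Longrightarrow> xs \<in> P \<Longrightarrow> ys \<in> P \<Longrightarrow> v \<in> set xs \<Longrightarrow> v \<in> set ys \<Longrightarrow> xs = ys"
  using lah_partitionD(3) by blast

lemma lah_partition_cover: "lah_partition n P \<Longrightarrow> v \<in> {1..n} \<Longrightarrow> \<exists>xs\<in>P. v \<in> set xs"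
  using lah_partitionD(4) by blast

lemma lah_partition_range: "lah_partition n P \<Longrightarrow> xs \<in> P \<Longrightarrow> v \<in> set xs \<Longrightarrow> v \<in> {1..n}"
  using lah_partitionD(4) by blast

lemma edges_subset_gens:
  assumes "lah_partition n P"
  shows "edges P \<subseteq> gens n"
proof
  fix e assume "e \<in> edges P"
  then obtain xs where e0: "xs \<in> P" "e \<in> list_edges xs" by (auto simp: edges_def)
  obtain a b where "e = (a, b)" by (cases e)
  then have e: "e = (a, b)" "xs \<in> P" "(a, b) \<in> list_edges xs" using e0 by auto
  then have "a \<in> {1..n}" "b \<in> {1..n}" "a \<noteq> b"
    using list_edges_set[OF e(3)] lah_partition_range[OF assms e(2)] list_edges_neq[OF
      lah_partitionD(2)[OF assms e(2)] e(3)] by auto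
  then show "e \<in> gens n" using e by (auto simp: gens_def)
qed

lemma finite_edges: "lah_partition n P \<Longrightarrow> finite (edges P)"
  using lah_partitionD(5) by (auto simp: edges_def)

lemma card_edges:
  assumes "lah_partition n P"
  shows "card (edges P) + card P = n"
proof -
  have fin: "finite P" using lah_partitionD(5)[OF assms] .
  have disj: "\<forall>xs\<in>P. \<forall>ys\<in>P. xs \<noteq> ys \<longrightarrow> list_edges xs \<inter> list_edges ys = {}"
  proof (intro ballI impI)
    fix xs ys assume "xs \<in> P" "ys \<in> P" "xs \<noteq> ys"
    then have "set xs \<inter> set ys = {}" using lah_partitionD(3)[OF assms] by blast
    then show "list_edges xs \<inter> list_edges ys = {}" by (auto dest: list_edges_set)
  qed
  have "card (edges P) = (\<Sum>xs\<in>P. card (list_edges xs))"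
    unfolding edges_def using fin disj by (intro card_UN_disjoint) auto
  also have "\<dots> = (\<Sum>xs\<in>P. length xs - 1)"
    using lah_partitionD(2)[OF assms] by (intro sum.cong) (auto simp: card_list_edges)
  finally have e1: "card (edges P) = (\<Sum>xs\<in>P. length xs - 1)" .
  have "n = card (\<Union>xs\<in>P. set xs)" using lah_partitionD(4)[OF assms] by simp
  also have "\<dots> = (\<Sum>xs\<in>P. card (set xs))"
    using fin lah_partitionD(3)[OF assms] by (intro card_UN_disjoint) auto
  also have "\<dots> = (\<Sum>xs\<in>P. (length xs - 1) + 1)"
    using lah_partitionD(1,2)[OF assms]
      by (intro sum.cong) (auto simp: distinct_card Suc_leI length_greater_0_conv)
  also have "\<dots> = (\<Sum>xs\<in>P. length xs - 1) + (\<Sum>xs\<in>P. 1)" by (rule sum.distrib)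
  also have "\<dots> = (\<Sum>xs\<in>P. length xs - 1) + card P" by simp
  finally show ?thesis using e1 by simp
qed

lemma lah_partition_split:
  assumes P: "lah_partition n P" and zs: "zs \<in> P" "zs = l1 @ l2" and ne: "l1 \<noteq> []" "l2 \<noteq> []"
  defines "P0 \<equiv> insert l1 (insert l2 (P - {zs}))"
  shows "lah_partition n P0" "card P0 = Suc (card P)"
    "edges P = insert (last l1, hd l2) (edges P0)" "(last l1, hd l2) \<notin> edges P0"
    "singletons P \<subseteq> singletons P0"
proof -
  have dz: "distinct zs" using lah_partitionD(2)[OF P zs(1)] .
  have d12: "set l1 \<inter> set l2 = {}" "distinct l1" "distinct l2" using dz zs(2) by auto
  have other: "\<And>ys. ys \<in> P \<Longrightarrow> ys \<noteq> zs \<Longrightarrow> set ys \<inter> set zs = {}" using lah_partitionD(3)[OF P] zs(1)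
    by blast
  have l1n: "l1 \<notin> P - {zs}"
  proof
    assume "l1 \<in> P - {zs}" then have "set l1 \<inter> set zs = {}" using other by blast
    then show False using ne zs(2) by (cases l1) auto
  qed
  have l2n: "l2 \<notin> P - {zs}"
  proof
    assume "l2 \<in> P - {zs}" then have "set l2 \<inter> set zs = {}" using other by blast
    then show False using ne zs(2) by (cases l2) auto
  qed
  have l12: "l1 \<noteq> l2" using d12 ne by (cases l1) auto
  have fin: "finite P" using lah_partitionD(5)[OF P] .
  show "lah_partition n P0" unfolding lah_partition_def P0_def
  proof (intro conjI)
    show "\<forall>xs\<in>insert l1 (insert l2 (P - {zs})). xs \<noteq> [] \<and> distinct xs"
      using ne d12 lah_partitionD(1,2)[OF P] by auto
    show "\<forall>xs\<in>insert l1 (insert l2 (P - {zs})). \<forall>ys\<in>insert l1 (insert l2 (P - {zs})).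
        xs \<noteq> ys \<longrightarrow> set xs \<inter> set ys = {}"
    proof (intro ballI impI)
      fix as bs assume as: "as \<in> insert l1 (insert l2 (P - {zs}))"
        and bs: "bs \<in> insert l1 (insert l2 (P - {zs}))" and ne: "as \<noteq> bs"
      have o1: "\<And>cs. cs \<in> P - {zs} \<Longrightarrow> set cs \<inter> set l1 = {} \<and> set cs \<inter> set l2 = {}"
        using other zs(2) by auto
      show "set as \<inter> set bs = {}"
        using as bs ne o1 d12(1) lah_partitionD(3)[OF P] by (auto; blast)
    qed
    have "(\<Union>xs\<in>P. set xs) = set zs \<union> (\<Union>xs\<in>P - {zs}. set xs)" using zs(1) by blast
    then show "(\<Union>xs\<in>insert l1 (insert l2 (P - {zs})). set xs) = {1..n}"
      using lah_partitionD(4)[OF P] zs(2) by auto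
    show "finite (insert l1 (insert l2 (P - {zs})))" using fin by simp
  qed
  have c1: "card (P - {zs}) = card P - 1" using zs(1) fin by simp
  have c2: "card P \<ge> 1" using zs(1) fin card_gt_0_iff[of P] by auto
  show "card P0 = Suc (card P)" unfolding P0_def using fin l1n l2n l12 c1 c2 by simp
  have "edges P = list_edges zs \<union> edges (P - {zs})" unfolding edges_def using zs(1) by blast
  then show "edges P = insert (last l1, hd l2) (edges P0)"
    unfolding P0_def edges_insert using zs(2) ne by (auto simp: list_edges_append)
  show "(last l1, hd l2) \<notin> edges P0"
  proof
    assume "(last l1, hd l2) \<in> edges P0"
    then obtain ys where ys: "ys \<in> P0" "(last l1, hd l2) \<in> list_edges ys" by (auto simp: edges_def)
    have a: "last l1 \<in> set l1" "hd l2 \<in> set l2" using ne by auto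
    have "last l1 \<in> set ys" "hd l2 \<in> set ys" using list_edges_set[OF ys(2)] by auto
    then show False using ys(1) a d12 other zs(2) unfolding P0_def by auto
  qed
  show "singletons P \<subseteq> singletons P0"
  proof
    fix y assume "y \<in> singletons P"
    then have "[y] \<in> P" by (simp add: singletons_def)
    moreover have "[y] \<noteq> zs" using ne zs(2) by (cases l1) auto
    ultimately show "y \<in> singletons P0" by (simp add: singletons_def P0_def)
  qed
qed

lemma lah_partition_join:
  assumes P: "lah_partition n P" and xs: "xs \<in> P" and ys: "ys \<in> P" and ne: "xs \<noteq> ys"
  defines "P' \<equiv> insert (xs @ ys) (P - {xs, ys})"
  shows "lah_partition n P'" "Suc (card P') = card P"
    "edges P' = insert (last xs, hd ys) (edges P)" "(last xs, hd ys) \<notin> edges P"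
    "\<And>y. y \<in> singletons P \<Longrightarrow> y \<notin> set xs \<Longrightarrow> y \<notin> set ys \<Longrightarrow> y \<in> singletons P'"
proof -
  have dxy: "set xs \<inter> set ys = {}" using lah_partitionD(3)[OF P xs ys ne] .
  have nexy: "xs \<noteq> []" "ys \<noteq> []" using lah_partitionD(1)[OF P] xs ys by auto
  have other: "\<And>zs. zs \<in> P \<Longrightarrow> zs \<noteq> xs \<Longrightarrow> zs \<noteq> ys \<Longrightarrow> set zs \<inter> (set xs \<union> set ys) = {}"
    using lah_partitionD(3)[OF P] xs ys by blast
  have fin: "finite P" using lah_partitionD(5)[OF P] .
  have nin: "xs @ ys \<notin> P - {xs, ys}"
  proof
    assume "xs @ ys \<in> P - {xs, ys}"
    then have "set (xs @ ys) \<inter> (set xs \<union> set ys) = {}" using other by blast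
    then show False using nexy by (cases xs) auto
  qed
  show "lah_partition n P'" unfolding lah_partition_def P'_def
  proof (intro conjI)
    show "\<forall>zs\<in>insert (xs @ ys) (P - {xs, ys}). zs \<noteq> [] \<and> distinct zs"
      using lah_partitionD(1,2)[OF P] xs ys dxy nexy by auto
    show "\<forall>as\<in>insert (xs @ ys) (P - {xs, ys}). \<forall>bs\<in>insert (xs @ ys) (P - {xs, ys}). as \<noteq> bs \<longrightarrow> set as
        \<inter> set bs = {}"
    proof (intro ballI impI)
      fix as bs assume as: "as \<in> insert (xs @ ys) (P - {xs, ys})"
        and bs: "bs \<in> insert (xs @ ys) (P - {xs, ys})" and ne: "as \<noteq> bs"
      have o1: "\<And>cs. cs \<in> P - {xs, ys} \<Longrightarrow> set cs \<inter> set (xs @ ys) = {}"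
        using other by auto
      show "set as \<inter> set bs = {}"
        using as bs ne o1 lah_partitionD(3)[OF P] by (auto; blast)
    qed
    show "(\<Union>zs\<in>insert (xs @ ys) (P - {xs, ys}). set zs) = {1..n}"
      using lah_partitionD(4)[OF P] xs ys by auto
    show "finite (insert (xs @ ys) (P - {xs, ys}))" using fin by simp
  qed
  have "card (P - {xs, ys}) = card P - 2" using fin xs ys ne
    by (simp add: card_Diff_subset)
  moreover have "card P \<ge> 2"
  proof -
    have "card {xs, ys} \<le> card P" using fin xs ys by (intro card_mono) auto
    then show ?thesis using ne by simp
  qed
  ultimately show "Suc (card P') = card P" unfolding P'_def using fin nin by simp
  have eP: "edges P = list_edges xs \<union> list_edges ys \<union> edges (P - {xs, ys})"
    unfolding edges_def using xs ys by blast
  show "edges P' = insert (last xs, hd ys) (edges P)"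
    unfolding P'_def edges_insert eP using nexy by (auto simp: list_edges_append)
  show "(last xs, hd ys) \<notin> edges P"
  proof
    assume "(last xs, hd ys) \<in> edges P"
    then obtain zs where zs: "zs \<in> P" "(last xs, hd ys) \<in> list_edges zs" by (auto simp: edges_def)
    have "last xs \<in> set zs" "hd ys \<in> set zs" using list_edges_set[OF zs(2)] by auto
    moreover have "last xs \<in> set xs" "hd ys \<in> set ys" using nexy by auto
    ultimately have "zs = xs" "zs = ys" using lah_partition_block_unique[OF P] zs(1) xs ys by blast+
    then show False using ne by simp
  qed
  fix y assume "y \<in> singletons P" "y \<notin> set xs" "y \<notin> set ys"
  then show "y \<in> singletons P'" by (auto simp: singletons_def P'_def)
qed

lemma not_singleton_if_in_long_block:
  assumes "lah_partition n P" "zs \<in> P" "x \<in> set zs" "y \<in> set zs" "x \<noteq> y" shows "x \<notin> singletons P"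
proof
  assume "x \<in> singletons P" then have xP: "[x] \<in> P" by (simp add: singletons_def)
  have "zs = [x]" using lah_partition_block_unique[OF assms(1,2) xP assms(3)] by simp
  then show False using assms(4,5) by simp
qed

lemma edges_avoid_singleton: "lah_partition n P \<Longrightarrow> [v] \<in> P \<Longrightarrow> (a, b) \<in> edges P \<Longrightarrow> a \<noteq> v \<and> b \<noteq> v"
proof -
  assume P: "lah_partition n P" and v: "[v] \<in> P" and e: "(a, b) \<in> edges P"
  obtain xs where xs: "xs \<in> P" "(a, b) \<in> list_edges xs" using e by (auto simp: edges_def)
  have ab: "a \<in> set xs" "b \<in> set xs" "a \<noteq> b"
    using list_edges_set[OF xs(2)] list_edges_neq[OF lah_partitionD(2)[OF P xs(1)] xs(2)] by auto
  show ?thesis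
  proof (rule ccontr)
    assume "\<not> (a \<noteq> v \<and> b \<noteq> v)"
    then have "xs = [v]" using lah_partition_block_unique[OF P xs(1) v] ab by auto
    then show False using ab by auto
  qed
qed

lemma lah_partition_join_through:
  assumes P: "lah_partition n P" and l1: "l1 \<in> P" and v: "[v] \<in> P" and l2: "l2 \<in> P"
    and d: "l1 \<noteq> [v]" "l2 \<noteq> [v]" "l1 \<noteq> l2"
  shows "\<exists>P2. lah_partition n P2 \<and> card P2 + 2 = card P
    \<and> edges P2 = insert (last l1, v) (insert (v, hd l2) (edges P))
    \<and> (\<forall>y. y \<in> singletons P \<longrightarrow> y \<notin> set l1 \<longrightarrow> y \<notin> set l2 \<longrightarrow> y \<noteq> v \<longrightarrow> y \<in> singletons P2)"
proof -
  define Pv where "Pv = insert (l1 @ [v]) (P - {l1, [v]})"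
  note J1 = lah_partition_join[OF P l1 v d(1), folded Pv_def]
  have l1v: "l1 @ [v] \<in> Pv" by (simp add: Pv_def)
  have l2Pv: "l2 \<in> Pv" using l2 d by (simp add: Pv_def)
  have ne: "l1 @ [v] \<noteq> l2"
  proof
    assume "l1 @ [v] = l2"
    then have "v \<in> set l2" by auto
    then have "l2 = [v]" using lah_partition_block_unique[OF P l2 v] by simp
    then show False using d by simp
  qed
  define P2 where "P2 = insert ((l1 @ [v]) @ l2) (Pv - {l1 @ [v], l2})"
  note J2 = lah_partition_join[OF J1(1) l1v l2Pv ne, folded P2_def]
  show ?thesis
  proof (intro exI conjI allI impI)
    show "lah_partition n P2" using J2(1) .
    show "card P2 + 2 = card P" using J1(2) J2(2) by simp
    show "edges P2 = insert (last l1, v) (insert (v, hd l2) (edges P))" using J1(3) J2(3) by auto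
    fix y assume "y \<in> singletons P" "y \<notin> set l1" "y \<notin> set l2" "y \<noteq> v"
    then show "y \<in> singletons P2" using J1(5) J2(5) by simp
  qed
qed

lemma lah_partition_insert_singleton:
  assumes P: "lah_partition n P" and zs: "zs \<in> P" "zs = l1 @ l2" and ne: "l1 \<noteq> []" "l2 \<noteq> []"
    and v: "[v] \<in> P"
  defines "P0 \<equiv> insert l1 (insert l2 (P - {zs}))"
  obtains P2 where "lah_partition n P2" "card P2 + 1 = card P"
    "edges P2 = insert (last l1, v) (insert (v, hd l2) (edges P0))"
      "singletons P - {v} \<subseteq> singletons P2"
proof -
  note Sp = lah_partition_split[OF P zs ne, folded P0_def]
  have l12: "set l1 \<inter> set l2 = {}" using lah_partitionD(2)[OF P zs(1)] zs(2) by auto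
  have "last l1 \<in> set l1" "hd l2 \<in> set l2" using ne by simp_all
  then have ends: "last l1 \<in> set zs" "hd l2 \<in> set zs" "last l1 \<noteq> hd l2" using zs(2) l12 by auto
  have not_zs: "y \<notin> set zs" if "y \<in> singletons P" for y
    using not_singleton_if_in_long_block[OF P zs(1), of y "last l1"]
      not_singleton_if_in_long_block[OF P zs(1), of y "hd l2"] that ends by blast
  have "v \<notin> set zs" using not_zs v by (simp add: singletons_def)
  then have "[v] \<noteq> zs" by auto
  then have v0: "[v] \<in> P0" using v by (simp add: P0_def)
  have d: "l1 \<noteq> [v]" "l2 \<noteq> [v]" using \<open>v \<notin> set zs\<close> zs(2) by auto
  have "l1 \<noteq> l2" using l12 ne(1) by (cases l1) auto
  moreover have "l1 \<in> P0" "l2 \<in> P0" by (simp_all add: P0_def)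
  ultimately obtain P2 where P2: "lah_partition n P2" "card P2 + 2 = card P0"
      "edges P2 = insert (last l1, v) (insert (v, hd l2) (edges P0))"
      "\<And>y. y \<in> singletons P0 \<Longrightarrow> y \<notin> set l1 \<Longrightarrow> y \<notin> set l2 \<Longrightarrow> y \<noteq> v \<Longrightarrow> y \<in> singletons P2"
    using lah_partition_join_through[OF Sp(1) _ v0 _ d] by blast
  moreover have "card P2 + 1 = card P" using P2(2) Sp(2) by simp
  moreover have "singletons P - {v} \<subseteq> singletons P2" using P2(4) Sp(5) not_zs zs(2) by auto
  ultimately show ?thesis using that by blast
qed

lemma singletons_subset_after_split:
  assumes P: "lah_partition n P" and ys: "ys \<in> P" "y \<in> set ys" "z \<in> set ys" "y \<noteq> z"
    and P0: "singletons P \<subseteq> singletons P0" and P': "singletons P0 - {a, b} \<subseteq> singletons P'"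
  shows "singletons P - {a, b} \<subseteq> singletons P' - {y, z}"
  using not_singleton_if_in_long_block[OF P ys(1)] ys(2-4) P0 P' by blast

lemma list_edges_subset_edges: "xs \<in> P \<Longrightarrow> list_edges xs \<subseteq> edges P" by (auto simp: edges_def)

definition singleton_partition :: "nat \<Rightarrow> nat list set" where
  "singleton_partition n = (\<lambda>i. [i]) ` {1..n}"

lemma singleton_partition: "lah_partition n (singleton_partition n)"
  "card (singleton_partition n) = n" "edges (singleton_partition n) = {}"
proof -
  show "lah_partition n (singleton_partition n)" unfolding lah_partition_def singleton_partition_def
    by auto
  have "inj_on (\<lambda>i. [i]) {1..n}" by (auto simp: inj_on_def)
  then show "card (singleton_partition n) = n" unfolding singleton_partition_def
    by (simp add: card_image)
  show "edges (singleton_partition n) = {}" by (auto simp: singleton_partition_def edges_def)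
qed

lemma finite_lah_partition: "finite {P. lah_partition n P}"
proof -
  have "length xs \<le> n" if "lah_partition n P" "xs \<in> P" for P xs
    using distinct_card[OF lah_partitionD(2)[OF that]] card_mono[of "{1..n}" "set xs"]
      lah_partition_range[OF that] by fastforce
  then have "{P. lah_partition n P} \<subseteq> Pow {xs. set xs \<subseteq> {1..n} \<and> length xs \<le> n}"
    using lah_partition_range by blast
  then show ?thesis by (rule finite_subset) (simp add: finite_lists_length_le)
qed

section \<open>Model maps: independence modulo the ideal\<close>

definition block_list :: "nat list set \<Rightarrow> nat list list" where
  "block_list Q = (SOME qs. set qs = Q \<and> distinct qs)"

definition block_concat :: "nat list set \<Rightarrow> nat list" where
  "block_concat Q = concat (block_list Q)"

definition position :: "nat list set \<Rightarrow> nat \<Rightarrow> nat" where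
  "position Q v = (THE t. t < length (block_concat Q) \<and> block_concat Q ! t = v)"

definition precedes :: "nat list set \<Rightarrow> nat \<Rightarrow> nat \<Rightarrow> bool" where
  "precedes Q i j \<longleftrightarrow> (\<exists>xs\<in>Q. i \<in> set xs \<and> j \<in> set xs \<and> position Q i < position Q j)"

text \<open>
  The target of the model map is again the exterior algebra on coefficient functions, now
  with the generators (t, 0) standing for the positions t in block_concat Q.
\<close>

definition segment :: "nat list set \<Rightarrow> nat \<Rightarrow> nat \<Rightarrow> ext" where
  "segment Q i j = (\<Sum>t\<in>{position Q i..<position Q j}. mono {(t, 0)})"

definition model_gen :: "nat list set \<Rightarrow> gen \<Rightarrow> ext" where
  "model_gen Q e = (if precedes Q (fst e) (snd e) then segment Q (fst e) (snd e) else 0)"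

definition model_map :: "nat \<Rightarrow> nat list set \<Rightarrow> ext \<Rightarrow> ext" where
  "model_map n Q = ext_extend (model_gen Q) (gens n)"

lemma block_list:
  assumes "lah_partition n Q"
  shows "set (block_list Q) = Q" "distinct (block_list Q)"
proof -
  have "\<exists>qs. set qs = Q \<and> distinct qs" using finite_distinct_list lah_partitionD(5)[OF assms]
    by blast
  then have "set (block_list Q) = Q \<and> distinct (block_list Q)" unfolding block_list_def
    by (rule someI_ex)
  then show "set (block_list Q) = Q" "distinct (block_list Q)" by auto
qed

lemma distinct_block_concat: "lah_partition n Q \<Longrightarrow> distinct (block_concat Q)"
  unfolding block_concat_def by (rule distinct_concat) (use block_list lah_partitionD in auto)

lemma set_block_concat: "lah_partition n Q \<Longrightarrow> set (block_concat Q) = {1..n}"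
  unfolding block_concat_def using block_list lah_partitionD(4) by auto

lemma block_concat_block:
  assumes "lah_partition n Q" "xs \<in> Q"
  shows "\<exists>pre post. block_concat Q = pre @ xs @ post"
proof -
  have "xs \<in> set (block_list Q)" using block_list(1)[OF assms(1)] assms(2) by simp
  then obtain q1 q2 where "block_list Q = q1 @ xs # q2" by (meson split_list)
  then show ?thesis unfolding block_concat_def by auto
qed

lemma position_nth:
  assumes "lah_partition n Q" "t < length (block_concat Q)"
  shows "position Q (block_concat Q ! t) = t"
  unfolding position_def
  by (rule the_equality) (use assms distinct_block_concat[OF assms(1)] nth_eq_iff_index_eq in auto)

lemma position_inj:
  assumes "lah_partition n Q" "i \<in> {1..n}" "j \<in> {1..n}" "position Q i = position Q j"
  shows "i = j"
proof -
  obtain a where a: "a < length (block_concat Q)" "block_concat Q ! a = i"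
    using assms(2) set_block_concat[OF assms(1)] by (metis in_set_conv_nth)
  obtain b where b: "b < length (block_concat Q)" "block_concat Q ! b = j"
    using assms(3) set_block_concat[OF assms(1)] by (metis in_set_conv_nth)
  have "a = b" using position_nth[OF assms(1) a(1)] position_nth[OF assms(1) b(1)] a b assms(4)
    by simp
  then show ?thesis using a b by simp
qed

lemma position_block:
  assumes "lah_partition n Q" "xs \<in> Q"
  shows "\<exists>p. \<forall>t<length xs. position Q (xs ! t) = p + t"
proof -
  obtain pre post where z: "block_concat Q = pre @ xs @ post" using block_concat_block[OF assms]
    by blast
  have "position Q (xs ! t) = length pre + t" if "t < length xs" for t
  proof -
    have "block_concat Q ! (length pre + t) = xs ! t" using z that by (simp add: nth_append)
    moreover have "length pre + t < length (block_concat Q)" using z that by simp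
    ultimately show ?thesis using position_nth[OF assms(1)] by metis
  qed
  then show ?thesis by blast
qed

lemma degree_one_segment: "degree_one (segment Q i j)" unfolding segment_def
  by (rule degree_one_sum) simp
lemma degree_one_model_gen: "degree_one (model_gen Q e)"
  by (simp add: model_gen_def degree_one_segment)

lemma segment_split:
  "position Q i \<le> position Q j \<Longrightarrow> position Q j \<le> position Q k
    \<Longrightarrow> segment Q i k = segment Q i j + segment Q j k"
  unfolding segment_def by (simp add: sum.atLeastLessThan_concat)

context
  fixes n Q assumes Q: "lah_partition n Q"
begin

lemma precedes_range: "precedes Q i j \<Longrightarrow> i \<in> {1..n} \<and> j \<in> {1..n}"
  unfolding precedes_def using lah_partition_range[OF Q] by blast

lemma precedes_trans: "precedes Q i j \<Longrightarrow> precedes Q j k \<Longrightarrow> precedes Q i k"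
  unfolding precedes_def using lah_partition_block_unique[OF Q] by (metis less_trans)

lemma precedes_asym: "precedes Q i j \<Longrightarrow> \<not> precedes Q j i"
  unfolding precedes_def by auto

lemma precedes_common_source:
  "precedes Q i j \<Longrightarrow> precedes Q i k \<Longrightarrow> j \<noteq> k \<Longrightarrow> precedes Q j k \<or> precedes Q k j"
proof -
  assume a: "precedes Q i j" "precedes Q i k" "j \<noteq> k"
  then obtain xs ys where xs: "xs \<in> Q" "i \<in> set xs" "j \<in> set xs"
    and ys: "ys \<in> Q" "i \<in> set ys" "k \<in> set ys"
    unfolding precedes_def by blast
  have "xs = ys" using lah_partition_block_unique[OF Q xs(1) ys(1) xs(2) ys(2)] .
  moreover have "position Q j \<noteq> position Q k" using position_inj[OF Q] precedes_range a by blast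
  ultimately show ?thesis using xs ys unfolding precedes_def by (metis linorder_neqE_nat)
qed

lemma precedes_common_target:
  "precedes Q i k \<Longrightarrow> precedes Q j k \<Longrightarrow> i \<noteq> j \<Longrightarrow> precedes Q i j \<or> precedes Q j i"
proof -
  assume a: "precedes Q i k" "precedes Q j k" "i \<noteq> j"
  then obtain xs ys where xs: "xs \<in> Q" "i \<in> set xs" "k \<in> set xs"
    and ys: "ys \<in> Q" "j \<in> set ys" "k \<in> set ys"
    unfolding precedes_def by blast
  have "xs = ys" using lah_partition_block_unique[OF Q xs(1) ys(1) xs(3) ys(3)] .
  moreover have "position Q i \<noteq> position Q j" using position_inj[OF Q] precedes_range a by blast
  ultimately show ?thesis using xs ys unfolding precedes_def by (metis linorder_neqE_nat)
qed

lemma precedes_position: "precedes Q i j \<Longrightarrow> position Q i < position Q j" unfolding precedes_def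
  by blast

lemma model_gen_precedes: "precedes Q i j \<Longrightarrow> model_gen Q (i, j) = segment Q i j"
  by (simp add: model_gen_def)
lemma model_gen_not_precedes: "\<not> precedes Q i j \<Longrightarrow> model_gen Q (i, j) = 0"
  by (simp add: model_gen_def)

lemma model_gen_rel_1:
  assumes "j \<noteq> k"
  shows "wedge (model_gen Q (i, j)) (model_gen Q (i, k))
    - (wedge (model_gen Q (i, j)) (model_gen Q (j, k)) - wedge (model_gen Q (i, k)) (model_gen Q (k, j))) = 0"
proof -
  note ac = wedge_anticommute[OF degree_one_segment degree_one_segment]
    and sq = wedge_self[OF degree_one_segment]
  consider "precedes Q i j \<and> precedes Q j k" | "precedes Q i k \<and> precedes Q k j" |
    "\<not> (precedes Q i j \<and> precedes Q j k)" "\<not> (precedes Q i k \<and> precedes Q k j)" by blast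
  then show ?thesis
  proof cases
    case 1
    then have ik: "precedes Q i k" and kj: "\<not> precedes Q k j" using precedes_trans precedes_asym
      by blast+
    have D: "segment Q i k = segment Q i j + segment Q j k" using 1
      by (intro segment_split) (auto dest: precedes_position)
    show ?thesis using 1 ik kj
      by (simp add: model_gen_precedes model_gen_not_precedes D wedge_add_right sq)
  next
    case 2
    then have ij: "precedes Q i j" and jk: "\<not> precedes Q j k" using precedes_trans precedes_asym
      by blast+
    have D: "segment Q i j = segment Q i k + segment Q k j" using 2
      by (intro segment_split) (auto dest: precedes_position)
    have "wedge (segment Q k j) (segment Q i k) = - wedge (segment Q i k) (segment Q k j)"
      by (rule ac)
    then show ?thesis using 2 ij jk
      by (simp add: model_gen_precedes model_gen_not_precedes D wedge_add_left sq)
  next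
    case 3
    have "\<not> (precedes Q i j \<and> precedes Q i k)" using 3 precedes_common_source assms by blast
    then have "wedge (model_gen Q (i, j)) (model_gen Q (i, k)) = 0"
      by (auto simp: model_gen_not_precedes)
    moreover have "wedge (model_gen Q (i, j)) (model_gen Q (j, k)) = 0" using 3
      by (auto simp: model_gen_not_precedes)
    moreover have "wedge (model_gen Q (i, k)) (model_gen Q (k, j)) = 0" using 3
      by (auto simp: model_gen_not_precedes)
    ultimately show ?thesis by simp
  qed
qed

lemma model_gen_rel_2:
  assumes "i \<noteq> j"
  shows "wedge (model_gen Q (i, k)) (model_gen Q (j, k))
    - (wedge (model_gen Q (i, j)) (model_gen Q (j, k)) - wedge (model_gen Q (j, i)) (model_gen Q (i, k))) = 0"
proof -
  note ac = wedge_anticommute[OF degree_one_segment degree_one_segment]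
    and sq = wedge_self[OF degree_one_segment]
  consider "precedes Q i j \<and> precedes Q j k" | "precedes Q j i \<and> precedes Q i k" |
    "\<not> (precedes Q i j \<and> precedes Q j k)" "\<not> (precedes Q j i \<and> precedes Q i k)" by blast
  then show ?thesis
  proof cases
    case 1
    then have ik: "precedes Q i k" and ji: "\<not> precedes Q j i" using precedes_trans precedes_asym
      by blast+
    have D: "segment Q i k = segment Q i j + segment Q j k" using 1
      by (intro segment_split) (auto dest: precedes_position)
    show ?thesis using 1 ik ji
      by (simp add: model_gen_precedes model_gen_not_precedes D wedge_add_left sq)
  next
    case 2
    then have jk: "precedes Q j k" and ij: "\<not> precedes Q i j" using precedes_trans precedes_asym
      by blast+
    have D: "segment Q j k = segment Q j i + segment Q i k" using 2
      by (intro segment_split) (auto dest: precedes_position)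
    have "wedge (segment Q i k) (segment Q j i) = - wedge (segment Q j i) (segment Q i k)"
      by (rule ac)
    then show ?thesis using 2 jk ij
      by (simp add: model_gen_precedes model_gen_not_precedes D wedge_add_right sq)
  next
    case 3
    have "\<not> (precedes Q i k \<and> precedes Q j k)" using 3 precedes_common_target assms by blast
    then have "wedge (model_gen Q (i, k)) (model_gen Q (j, k)) = 0"
      by (auto simp: model_gen_not_precedes)
    moreover have "wedge (model_gen Q (i, j)) (model_gen Q (j, k)) = 0" using 3
      by (auto simp: model_gen_not_precedes)
    moreover have "wedge (model_gen Q (j, i)) (model_gen Q (i, k)) = 0" using 3
      by (auto simp: model_gen_not_precedes)
    ultimately show ?thesis by simp
  qed
qed

lemma model_gen_rel_3: "wedge (model_gen Q (i, j)) (model_gen Q (j, i)) = 0"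
  using precedes_asym by (cases "precedes Q i j") (auto simp: model_gen_not_precedes)

lemma model_map_diff: "model_map n Q (f - g) = model_map n Q f - model_map n Q g"
  by (simp add: model_map_def ext_extend_diff)

lemma model_map_r_r:
  "\<lbrakk>i \<in> {1..n}; j \<in> {1..n}; k \<in> {1..n}; l \<in> {1..n}; i \<noteq> j; k \<noteq> l\<rbrakk>
    \<Longrightarrow> model_map n Q (wedge (r i j) (r k l)) = wedge (model_gen Q (i, j)) (model_gen Q (k, l))"
  unfolding model_map_def by (rule ext_extend_r_r[OF finite_gens gensI gensI degree_one_model_gen])

lemma model_map_rels: "q \<in> rels n \<Longrightarrow> model_map n Q q = 0"
  unfolding rels_def
  by (elim UnE CollectE exE conjE) (simp_all add: model_map_diff model_map_r_r model_gen_rel_1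
    model_gen_rel_2 model_gen_rel_3)

end

lemma supported_on_r: "(i, j) \<in> G \<Longrightarrow> supported_on G (r i j)" by (simp add: r_def supported_on_mono)

lemma supported_on_rels:
  assumes "q \<in> rels n"
  shows "supported_on (gens n) q"
  using assms unfolding rels_def
  by (auto intro!: supported_on_diff supported_on_wedge supported_on_r simp: gens_def)

lemma model_map_ideal_gen:
  assumes Q: "lah_partition n Q" and A: "A \<subseteq> gens n" and B: "B \<subseteq> gens n" and q: "q \<in> rels n"
  shows "model_map n Q (wedge (wedge (mono A) q) (mono B)) = 0"
proof -
  have s: "supported_on (gens n) (mono A)" "supported_on (gens n) (mono B)"
    "supported_on (gens n) q"
    using A B supported_on_mono supported_on_rels[OF q] by auto
  show ?thesis
    using model_map_rels[OF Q q] s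
    by (simp add: model_map_def ext_extend_wedge[OF finite_gens degree_one_model_gen]
      supported_on_wedge)
qed

lemma model_map_ideal:
  assumes Q: "lah_partition n Q" and f: "f \<in> ideal_deg n k"
  shows "model_map n Q f = 0"
  using f unfolding ideal_deg_def
proof (induction rule: V.span_induct)
  case base
  show ?case by (auto simp: V.subspace_def model_map_def ext_extend_zero ext_extend_add
    ext_extend_scale)
next
  case (step x)
  then show ?case using model_map_ideal_gen[OF Q] by blast
qed

lemma edges_successor_unique:
  assumes P: "lah_partition n P" "(a, b) \<in> edges P" "(a, b') \<in> edges P"
  shows "b = b'"
proof -
  obtain xs where xs: "xs \<in> P" "(a, b) \<in> list_edges xs" using assms(2) by (auto simp: edges_def)
  obtain ys where ys: "ys \<in> P" "(a, b') \<in> list_edges ys" using assms(3) by (auto simp: edges_def)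
  have "xs = ys" using lah_partition_block_unique[OF P(1) xs(1) ys(1)] list_edges_set xs(2) ys(2)
    by blast
  then obtain s t where st: "Suc s < length xs" "a = xs ! s" "b = xs ! Suc s"
      "Suc t < length xs" "a = xs ! t" "b' = xs ! Suc t"
    using xs(2) ys(2) by (auto simp: list_edges_nth)
  have "s = t" using st lah_partitionD(2)[OF P(1) xs(1)] nth_eq_iff_index_eq by (metis Suc_lessD)
  then show ?thesis using st by simp
qed

lemma model_gen_edge:
  assumes Q: "lah_partition n Q" and e: "e \<in> edges Q"
  shows "model_gen Q e = mono {(position Q (fst e), 0)}"
proof -
  obtain xs where xs: "xs \<in> Q" "e \<in> list_edges xs" using e by (auto simp: edges_def)
  obtain a b where ab: "e = (a, b)" by (cases e)
  then obtain t where t: "Suc t < length xs" "a = xs ! t" "b = xs ! Suc t" using xs(2)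
    by (auto simp: list_edges_nth)
  obtain p where p: "\<forall>t<length xs. position Q (xs ! t) = p + t" using position_block[OF Q xs(1)]
    by blast
  have ra: "position Q a = p + t" and rb: "position Q b = Suc (p + t)" using p t by auto
  have "precedes Q a b" unfolding precedes_def using xs(1) t ra rb by (intro bexI[of _ xs]) auto
  then show ?thesis using ab ra rb by (simp add: model_gen_def segment_def)
qed

lemma model_map_own_edges:
  assumes Q: "lah_partition n Q"
  shows "model_map n Q (mono (edges Q)) \<noteq> 0"
proof -
  have fin: "finite (edges Q)" using finite_edges[OF Q] .
  have inj: "inj_on (\<lambda>e. (position Q (fst e), 0::nat)) (edges Q)"
  proof (rule inj_onI)
    fix e1 e2 assume e: "e1 \<in> edges Q" "e2 \<in> edges Q"
      "(position Q (fst e1), 0::nat) = (position Q (fst e2), 0)"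
    obtain a b where ab: "e1 = (a, b)" by (cases e1)
    obtain a' b' where ab': "e2 = (a', b')" by (cases e2)
    have g1: "(a, b) \<in> gens n" using edges_subset_gens[OF Q] e(1) ab by blast
    have g2: "(a', b') \<in> gens n" using edges_subset_gens[OF Q] e(2) ab' by blast
    have ha: "a \<in> {1..n}" using g1 by (simp add: gens_def)
    have ha': "a' \<in> {1..n}" using g2 by (simp add: gens_def)
    have "position Q a = position Q a'" using e(3) ab ab' by simp
    then have aa: "a = a'" using position_inj[OF Q ha ha'] by simp
    have e1': "(a, b) \<in> edges Q" using e(1) ab by simp
    have e2': "(a, b') \<in> edges Q" using e(2) ab' aa by simp
    have "b = b'" using edges_successor_unique[OF Q e1' e2'] .
    then show "e1 = e2" using ab ab' aa by simp
  qed
  have "\<exists>c. c \<noteq> 0 \<and> ordered_wedge (model_gen Q) (edges Q) = qscale c (mono ((\<lambda>e. (position Q (fst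
      e), 0::nat)) ` edges Q))"
    by (rule ordered_wedge_of_monomials[OF fin inj]) (rule model_gen_edge[OF Q])
  then obtain c where c: "c \<noteq> 0"
    "ordered_wedge (model_gen Q) (edges Q) = qscale c (mono ((\<lambda>e. (position Q (fst e), 0::nat)) `
        edges Q))"
    by blast
  define T where "T = (\<lambda>e. (position Q (fst e), 0::nat)) ` edges Q"
  have h: "ordered_wedge (model_gen Q) (edges Q) T = c" using c(2) by (simp add: T_def mono_def)
  have "ordered_wedge (model_gen Q) (edges Q) \<noteq> 0"
  proof
    assume "ordered_wedge (model_gen Q) (edges Q) = 0"
    then have "ordered_wedge (model_gen Q) (edges Q) T = 0" by simp
    then show False using h c(1) by simp
  qed
  then show ?thesis using ext_extend_mono[OF finite_gens edges_subset_gens[OF Q]]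
    by (simp add: model_map_def)
qed

definition block_of :: "nat list set \<Rightarrow> nat \<Rightarrow> nat list" where
  "block_of Q v = (THE xs. xs \<in> Q \<and> v \<in> set xs)"

lemma block_of:
  assumes "lah_partition n Q" "v \<in> {1..n}"
  shows "block_of Q v \<in> Q" "v \<in> set (block_of Q v)"
proof -
  have "\<exists>!xs. xs \<in> Q \<and> v \<in> set xs"
    using lah_partition_cover[OF assms] lah_partition_block_unique[OF assms(1)] by blast
  then have "block_of Q v \<in> Q \<and> v \<in> set (block_of Q v)" unfolding block_of_def by (rule theI')
  then show "block_of Q v \<in> Q" "v \<in> set (block_of Q v)" by auto
qed

lemma set_subset_block_of_hd:
  assumes P: "lah_partition n P" and Q: "lah_partition n Q" and ys: "ys \<in> P"
    and fwd: "\<And>a b. (a, b) \<in> edges P \<Longrightarrow> precedes Q a b"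
  shows "set ys \<subseteq> set (block_of Q (hd ys))"
proof -
  have hd: "hd ys \<in> {1..n}" using lah_partition_range[OF P ys] lah_partitionD(1)[OF P ys] by simp
  have "ys ! t \<in> set (block_of Q (hd ys))" if "t < length ys" for t
    using that
  proof (induction t)
    case 0
    then show ?case using block_of[OF Q hd] lah_partitionD(1)[OF P ys] by (simp add: hd_conv_nth)
  next
    case (Suc t)
    then have "precedes Q (ys ! t) (ys ! Suc t)" using fwd ys
      by (auto simp: edges_def list_edges_nth)
    then obtain xs where xs: "xs \<in> Q" "ys ! t \<in> set xs" "ys ! Suc t \<in> set xs" unfolding precedes_def
      by blast
    have "xs = block_of Q (hd ys)"
      using lah_partition_block_unique[OF Q xs(1) _ xs(2)] Suc block_of(1)[OF Q hd] by simp
    then show ?case using xs by simp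
  qed
  then show ?thesis by (auto simp: in_set_conv_nth)
qed

lemma eq_block_if_precedes_consecutive:
  assumes Q: "lah_partition n Q" and xs: "xs \<in> Q" and set_eq: "set ys = set xs"
    and cons: "\<And>t. Suc t < length ys \<Longrightarrow> precedes Q (ys ! t) (ys ! Suc t)"
  shows "ys = xs"
proof -
  obtain p where p: "\<forall>t<length xs. position Q (xs ! t) = p + t" using position_block[OF Q xs]
    by blast
  have "sorted_wrt (<) (map (position Q) ys)"
    by (subst sorted_wrt_iff_nth_Suc_transp) (auto intro: transpI simp: precedes_position[OF Q]
      cons)
  moreover have "sorted_wrt (<) (map (position Q) xs)"
    by (subst sorted_wrt_iff_nth_Suc_transp) (auto intro: transpI simp: p)
  moreover have "set (map (position Q) ys) = set (map (position Q) xs)" using set_eq by simp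
  ultimately have "map (position Q) ys = map (position Q) xs"
    by (simp add: strict_sorted_iff sorted_distinct_set_unique)
  moreover have "inj_on (position Q) (set ys \<union> set xs)"
    using position_inj[OF Q] lah_partition_range[OF Q xs] set_eq by (auto intro!: inj_onI)
  ultimately show "ys = xs" using inj_on_map_eq_map by blast
qed

lemma lah_partition_eqI:
  assumes P: "lah_partition n P" and Q: "lah_partition n Q" and card: "card P = card Q"
    and fwd: "\<And>a b. (a, b) \<in> edges P \<Longrightarrow> precedes Q a b"
  shows "P = Q"
proof -
  define phi where "phi ys = block_of Q (hd ys)" for ys
  have sub: "set ys \<subseteq> set (phi ys)" if "ys \<in> P" for ys
    unfolding phi_def by (rule set_subset_block_of_hd[OF P Q that fwd])
  have phiQ: "phi ys \<in> Q" if "ys \<in> P" for ys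
    using block_of(1)[OF Q] lah_partition_range[OF P that] lah_partitionD(1)[OF P that]
      by (simp add: phi_def)
  have img: "phi ` P = Q"
  proof
    show "phi ` P \<subseteq> Q" using phiQ by auto
    show "Q \<subseteq> phi ` P"
    proof
      fix xs assume xs: "xs \<in> Q"
      have v: "hd xs \<in> set xs" using lah_partitionD(1)[OF Q xs] by simp
      then have "hd xs \<in> {1..n}" using lah_partition_range[OF Q xs] by blast
      then obtain ys where ys: "ys \<in> P" "hd xs \<in> set ys" using lah_partition_cover[OF P] by blast
      then have "hd xs \<in> set (phi ys)" using sub by blast
      then have "phi ys = xs" using lah_partition_block_unique[OF Q phiQ[OF ys(1)] xs _ v] by simp
      then show "xs \<in> phi ` P" using ys by blast
    qed
  qed
  have inj: "inj_on phi P"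
    using lah_partitionD(5)[OF P] img card by (simp add: eq_card_imp_inj_on)
  have set_eq: "set ys = set (phi ys)" if ys: "ys \<in> P" for ys
  proof
    show "set ys \<subseteq> set (phi ys)" using sub[OF ys] .
    show "set (phi ys) \<subseteq> set ys"
    proof
      fix v assume v: "v \<in> set (phi ys)"
      then have "v \<in> {1..n}" using lah_partition_range[OF Q phiQ[OF ys]] by blast
      then obtain ys' where ys': "ys' \<in> P" "v \<in> set ys'" using lah_partition_cover[OF P] by blast
      have "phi ys' = phi ys"
        using lah_partition_block_unique[OF Q phiQ[OF ys'(1)] phiQ[OF ys]] sub[OF ys'(1)] ys'(2) v
          by blast
      then have "ys' = ys" using inj ys ys'(1) by (simp add: inj_on_eq_iff)
      then show "v \<in> set ys" using ys' by simp
    qed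
  qed
  have "phi ys = ys" if ys: "ys \<in> P" for ys
  proof -
    have "precedes Q (ys ! t) (ys ! Suc t)" if "Suc t < length ys" for t
      using fwd ys that by (auto simp: edges_def list_edges_nth)
    then show ?thesis using eq_block_if_precedes_consecutive[OF Q phiQ[OF ys] set_eq[OF ys]] by simp
  qed
  then have "phi ` P = P" by (auto simp: image_iff)
  then show ?thesis using img by simp
qed

lemma model_map_other_edges:
  assumes P: "lah_partition n P" and Q: "lah_partition n Q" and card: "card P = card Q"
    and ne: "P \<noteq> Q"
  shows "model_map n Q (mono (edges P)) = 0"
proof -
  obtain a b where ab: "(a, b) \<in> edges P" "\<not> precedes Q a b" using lah_partition_eqI[OF P Q card] ne
    by blast
  have "model_gen Q (a, b) = 0" using ab(2) by (simp add: model_gen_def)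
  then have "ordered_wedge (model_gen Q) (edges P) = 0"
    using ordered_wedge_eq_0[OF finite_edges[OF P] ab(1)] by simp
  then show ?thesis using ext_extend_mono[OF finite_gens edges_subset_gens[OF P]]
    by (simp add: model_map_def)
qed

section \<open>Monomials in the ideal\<close>

lemma ideal_degI:
  assumes "A \<subseteq> gens n" "q \<in> rels n" "card A + 2 = k"
  shows "wedge (mono A) q \<in> ideal_deg n k"
proof -
  have "wedge (wedge (mono A) q) (mono {}) = wedge (mono A) q" by (simp add: wedge_one_right)
  moreover have "wedge (wedge (mono A) q) (mono {}) \<in> ideal_deg n k"
    unfolding ideal_deg_def by (rule V.span_base) (use assms in force)
  ultimately show ?thesis by simp
qed

lemma rels_1I:
  "\<lbrakk>i \<in> {1..n}; j \<in> {1..n}; k \<in> {1..n}; i \<noteq> j; i \<noteq> k; j \<noteq> k\<rbrakk>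
    \<Longrightarrow> wedge (r i j) (r i k) - (wedge (r i j) (r j k) - wedge (r i k) (r k j)) \<in> rels n"
  unfolding rels_def by blast

lemma rels_2I:
  "\<lbrakk>i \<in> {1..n}; j \<in> {1..n}; k \<in> {1..n}; i \<noteq> j; i \<noteq> k; j \<noteq> k\<rbrakk>
    \<Longrightarrow> wedge (r i k) (r j k) - (wedge (r i j) (r j k) - wedge (r j i) (r i k)) \<in> rels n"
  unfolding rels_def by blast

lemma rels_3I: "i \<in> {1..n} \<Longrightarrow> j \<in> {1..n} \<Longrightarrow> i \<noteq> j \<Longrightarrow> wedge (r i j) (r j i) \<in> rels n"
  unfolding rels_def by blast

lemma in_span_of_combination:
  assumes "qscale c1 m1 - (qscale c2 m2 - qscale c3 m3) \<in> V.span X"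
  shows "c1 \<noteq> 0 \<Longrightarrow> qscale c2 m2 \<in> V.span X \<Longrightarrow> qscale c3 m3 \<in> V.span X \<Longrightarrow> m1 \<in> V.span X"
    and "c2 \<noteq> 0 \<Longrightarrow> qscale c1 m1 \<in> V.span X \<Longrightarrow> qscale c3 m3 \<in> V.span X \<Longrightarrow> m2 \<in> V.span X"
proof -
  assume h: "c1 \<noteq> 0" "qscale c2 m2 \<in> V.span X" "qscale c3 m3 \<in> V.span X"
  have e: "qscale c1 m1 = (qscale c1 m1 - (qscale c2 m2 - qscale c3 m3)) + (qscale c2 m2 - qscale c3
      m3)" by simp
  have "(qscale c1 m1 - (qscale c2 m2 - qscale c3 m3)) + (qscale c2 m2 - qscale c3 m3) \<in> V.span X"
    using V.span_add[OF assms V.span_diff[OF h(2) h(3)]] .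
  then have "qscale c1 m1 \<in> V.span X" by (subst e)
  then show "m1 \<in> V.span X" using span_qscale_iff[OF h(1)] by simp
next
  assume h: "c2 \<noteq> 0" "qscale c1 m1 \<in> V.span X" "qscale c3 m3 \<in> V.span X"
  have e: "qscale c2 m2 = qscale c1 m1 + qscale c3 m3 - (qscale c1 m1 - (qscale c2 m2 - qscale c3
      m3))" by simp
  have "qscale c1 m1 + qscale c3 m3 - (qscale c1 m1 - (qscale c2 m2 - qscale c3 m3)) \<in> V.span X"
    using V.span_diff[OF V.span_add[OF h(2) h(3)] assms] .
  then have "qscale c2 m2 \<in> V.span X" by (subst e)
  then show "m2 \<in> V.span X" using span_qscale_iff[OF h(1)] by simp
qed

definition fresh_pair :: "gen set \<Rightarrow> gen \<Rightarrow> gen \<Rightarrow> bool" where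
  "fresh_pair A e e' \<longleftrightarrow> e \<noteq> e' \<and> e \<notin> A \<and> e' \<notin> A"

definition pair_mono :: "gen set \<Rightarrow> gen \<Rightarrow> gen \<Rightarrow> ext" where
  "pair_mono A e e' = mono (insert e (insert e' A))"

text \<open>
  Multiplying a relation t1 - (t2 - t3) by mono A turns each t_i into a multiple of a monomial,
  nonzero exactly when its two generators are fresh for A. Modulo a span containing the ideal,
  the monomial of t1 or of t2 is therefore a combination of the other two.
\<close>

lemma pair_mono_reduction:
  assumes A: "A \<subseteq> gens n" "card A + 2 = k" and fA: "finite A"
    and q: "wedge (r a1 b1) (r a2 b2) - (wedge (r a3 b3) (r a4 b4) - wedge (r a5 b5) (r a6 b6)) \<in>
        rels n"
    and I: "ideal_deg n k \<subseteq> V.span X"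
  shows "\<lbrakk>fresh_pair A (a1, b1) (a2, b2);
      fresh_pair A (a3, b3) (a4, b4) \<Longrightarrow> pair_mono A (a3, b3) (a4, b4) \<in> V.span X;
      fresh_pair A (a5, b5) (a6, b6) \<Longrightarrow> pair_mono A (a5, b5) (a6, b6) \<in> V.span X\<rbrakk>
      \<Longrightarrow> pair_mono A (a1, b1) (a2, b2) \<in> V.span X"
    and "\<lbrakk>fresh_pair A (a3, b3) (a4, b4);
      fresh_pair A (a1, b1) (a2, b2) \<Longrightarrow> pair_mono A (a1, b1) (a2, b2) \<in> V.span X;
      fresh_pair A (a5, b5) (a6, b6) \<Longrightarrow> pair_mono A (a5, b5) (a6, b6) \<in> V.span X\<rbrakk>
      \<Longrightarrow> pair_mono A (a3, b3) (a4, b4) \<in> V.span X"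
proof -
  have scaled: "\<exists>c. wedge (mono A) (wedge (r a b) (r a' b')) = qscale c (pair_mono A (a, b) (a',
      b'))
      \<and> (c \<noteq> 0 \<longleftrightarrow> fresh_pair A (a, b) (a', b'))" for a b a' b'
    using wedge_mono_r_r[OF fA, of a b a' b'] by (auto simp: pair_mono_def fresh_pair_def)
  obtain c1 c2 c3 where c1: "wedge (mono A) (wedge (r a1 b1) (r a2 b2)) = qscale c1 (pair_mono A
      (a1, b1) (a2, b2))"
      "c1 \<noteq> 0 \<longleftrightarrow> fresh_pair A (a1, b1) (a2, b2)"
    and c2: "wedge (mono A) (wedge (r a3 b3) (r a4 b4)) = qscale c2 (pair_mono A (a3, b3) (a4, b4))"
      "c2 \<noteq> 0 \<longleftrightarrow> fresh_pair A (a3, b3) (a4, b4)"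
    and c3: "wedge (mono A) (wedge (r a5 b5) (r a6 b6)) = qscale c3 (pair_mono A (a5, b5) (a6, b6))"
      "c3 \<noteq> 0 \<longleftrightarrow> fresh_pair A (a5, b5) (a6, b6)"
    using scaled[of a1 b1 a2 b2] scaled[of a3 b3 a4 b4] scaled[of a5 b5 a6 b6] by blast
  have "wedge (mono A) (wedge (r a1 b1) (r a2 b2) - (wedge (r a3 b3) (r a4 b4) - wedge (r a5 b5) (r
      a6 b6)))
      \<in> V.span X"
    using ideal_degI[OF A(1) q A(2)] I by blast
  then have main: "qscale c1 (pair_mono A (a1, b1) (a2, b2))
      - (qscale c2 (pair_mono A (a3, b3) (a4, b4)) - qscale c3 (pair_mono A (a5, b5) (a6, b6))) \<in>
          V.span X"
    by (simp add: wedge_diff_right c1 c2 c3)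
  have t: "qscale c (pair_mono A e e') \<in> V.span X"
    if "c \<noteq> 0 \<longleftrightarrow> fresh_pair A e e'" "fresh_pair A e e' \<Longrightarrow> pair_mono A e e' \<in> V.span X" for c e e'
    using that by (cases "c = 0") (auto intro: V.span_scale simp: V.span_zero)
  show "pair_mono A (a1, b1) (a2, b2) \<in> V.span X"
    if "fresh_pair A (a1, b1) (a2, b2)"
      and h2: "fresh_pair A (a3, b3) (a4, b4) \<Longrightarrow> pair_mono A (a3, b3) (a4, b4) \<in> V.span X"
      and h3: "fresh_pair A (a5, b5) (a6, b6) \<Longrightarrow> pair_mono A (a5, b5) (a6, b6) \<in> V.span X"
    by (rule in_span_of_combination(1)[OF main]) (use that c1(2) t[OF c2(2) h2] t[OF c3(2) h3] in
      auto)
  show "pair_mono A (a3, b3) (a4, b4) \<in> V.span X"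
    if "fresh_pair A (a3, b3) (a4, b4)"
      and h1: "fresh_pair A (a1, b1) (a2, b2) \<Longrightarrow> pair_mono A (a1, b1) (a2, b2) \<in> V.span X"
      and h3: "fresh_pair A (a5, b5) (a6, b6) \<Longrightarrow> pair_mono A (a5, b5) (a6, b6) \<in> V.span X"
    by (rule in_span_of_combination(2)[OF main]) (use that c2(2) t[OF c1(2) h1] t[OF c3(2) h3] in
      auto)
qed

lemma subspace_ideal_deg: "V.subspace (ideal_deg n k)" by (simp add: ideal_deg_def)

lemma span_ideal_deg: "V.span (ideal_deg n k) = ideal_deg n k"
  by (simp add: subspace_ideal_deg)

lemma mono_in_ideal_deg_if_2_cycle:
  assumes S: "S \<subseteq> gens n" "(i, j) \<in> S" "(j, i) \<in> S"
  shows "mono S \<in> ideal_deg n (card S)"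
proof -
  have fS: "finite S" using S(1) finite_gens finite_subset by blast
  have ij: "i \<in> {1..n}" "j \<in> {1..n}" "i \<noteq> j" using S by (auto simp: gens_def)
  define A where "A = S - {(i, j), (j, i)}"
  have SA: "S = insert (i, j) (insert (j, i) A)" using S A_def by auto
  have nA: "(i, j) \<notin> A" "(j, i) \<notin> A" by (auto simp: A_def)
  have fA: "finite A" using fS by (simp add: A_def)
  have cA: "card A + 2 = card S" unfolding SA using nA ij fA by simp
  obtain c where c: "wedge (mono A) (wedge (r i j) (r j i)) = qscale c (mono S)" "c \<noteq> 0"
    using wedge_mono_r_r[OF fA, of i j j i] nA ij SA by auto
  have "wedge (mono A) (wedge (r i j) (r j i)) \<in> ideal_deg n (card S)"
    by (rule ideal_degI[OF _ rels_3I[OF ij] cA]) (use S(1) in \<open>auto simp: A_def\<close>)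
  then show ?thesis using c span_qscale_iff[OF c(2), of "mono S" "ideal_deg n (card S)"]
    span_ideal_deg by simp
qed

lemma mono_in_ideal_deg_if_chord:
  assumes c: "c0 \<in> {1..n}" "c1 \<in> {1..n}" "c2 \<in> {1..n}" "c0 \<noteq> c1" "c1 \<noteq> c2" "c0 \<noteq> c2"
    and A: "A \<subseteq> gens n" "finite A"
    and e0: "e0 = (c0, c1) \<or> e0 = (c1, c0)" "e0 \<notin> A"
      and e1: "e1 = (c1, c2) \<or> e1 = (c2, c1)" "e1 \<notin> A"
    and chord: "\<And>x y. x \<in> {(c0, c2), (c2, c0)} \<Longrightarrow> y \<in> gens n \<Longrightarrow> fresh_pair A x y
      \<Longrightarrow> mono (insert x (insert y A)) \<in> ideal_deg n (card A + 2)"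
  shows "mono (insert e0 (insert e1 A)) \<in> ideal_deg n (card A + 2)"
proof -
  note span = span_ideal_deg[of n "card A + 2"]
  have chord_left: "pair_mono A x y \<in> V.span (ideal_deg n (card A + 2))"
    if "fresh_pair A x y" "x \<in> {(c0, c2), (c2, c0)}" "y \<in> gens n" for x y
    unfolding span pair_mono_def using chord that by blast
  have chord_right: "pair_mono A y x \<in> V.span (ideal_deg n (card A + 2))"
    if "fresh_pair A y x" "x \<in> {(c0, c2), (c2, c0)}" "y \<in> gens n" for x y
    using chord_left[of x y] that by (auto simp: pair_mono_def fresh_pair_def insert_commute)
  have X02: "(c0, c2) \<in> {(c0, c2), (c2, c0)}" and X20: "(c2, c0) \<in> {(c0, c2), (c2, c0)}" by auto
  have G: "(c1, c0) \<in> gens n" "(c1, c2) \<in> gens n" "(c2, c1) \<in> gens n" "(c0, c1) \<in> gens n"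
    using c by (auto simp: gens_def)
  note red = pair_mono_reduction[OF A(1) refl A(2) _ V.span_superset]
  consider "e0 = (c1, c0)" "e1 = (c1, c2)" | "e0 = (c0, c1)" "e1 = (c2, c1)"
    | "e0 = (c0, c1)" "e1 = (c1, c2)" | "e0 = (c1, c0)" "e1 = (c2, c1)"
    using e0(1) e1(1) by blast
  then show ?thesis
  proof cases
    case 1
    have "wedge (r c1 c0) (r c1 c2) - (wedge (r c1 c0) (r c0 c2) - wedge (r c1 c2) (r c2 c0)) \<in> rels
        n"
      by (rule rels_1I) (use c in auto)
    moreover have "fresh_pair A (c1, c0) (c1, c2)" using 1 e0 e1 c by (simp add: fresh_pair_def)
    ultimately have "pair_mono A (c1, c0) (c1, c2) \<in> V.span (ideal_deg n (card A + 2))"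
      using red(1) chord_right[OF _ X02 G(1)] chord_right[OF _ X20 G(2)] by blast
    then show ?thesis using 1 unfolding span by (simp add: pair_mono_def)
  next
    case 2
    have "wedge (r c0 c1) (r c2 c1) - (wedge (r c0 c2) (r c2 c1) - wedge (r c2 c0) (r c0 c1)) \<in> rels
        n"
      by (rule rels_2I) (use c in auto)
    moreover have "fresh_pair A (c0, c1) (c2, c1)" using 2 e0 e1 c by (simp add: fresh_pair_def)
    ultimately have "pair_mono A (c0, c1) (c2, c1) \<in> V.span (ideal_deg n (card A + 2))"
      using red(1) chord_left[OF _ X02 G(3)] chord_left[OF _ X20 G(4)] by blast
    then show ?thesis using 2 unfolding span by (simp add: pair_mono_def)
  next
    case 3
    have "wedge (r c0 c2) (r c1 c2) - (wedge (r c0 c1) (r c1 c2) - wedge (r c1 c0) (r c0 c2)) \<in> rels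
        n"
      by (rule rels_2I) (use c in auto)
    moreover have "fresh_pair A (c0, c1) (c1, c2)" using 3 e0 e1 c by (simp add: fresh_pair_def)
    ultimately have "pair_mono A (c0, c1) (c1, c2) \<in> V.span (ideal_deg n (card A + 2))"
      using red(2) chord_left[OF _ X02 G(2)] chord_right[OF _ X02 G(1)] by blast
    then show ?thesis using 3 unfolding span by (simp add: pair_mono_def)
  next
    case 4
    have "wedge (r c2 c1) (r c2 c0) - (wedge (r c2 c1) (r c1 c0) - wedge (r c2 c0) (r c0 c1)) \<in> rels
        n"
      by (rule rels_1I) (use c in auto)
    moreover have "fresh_pair A (c2, c1) (c1, c0)" using 4 e0 e1 c by (auto simp: fresh_pair_def)
    ultimately have "pair_mono A (c2, c1) (c1, c0) \<in> V.span (ideal_deg n (card A + 2))"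
      using red(2) chord_right[OF _ X20 G(3)] chord_left[OF _ X20 G(4)] by blast
    then show ?thesis using 4 unfolding span by (simp add: pair_mono_def insert_commute)
  qed
qed

definition linked :: "gen set \<Rightarrow> nat \<Rightarrow> nat \<Rightarrow> bool" where
  "linked S x y \<longleftrightarrow> (x, y) \<in> S \<or> (y, x) \<in> S"

definition is_cycle :: "gen set \<Rightarrow> nat list \<Rightarrow> bool" where
  "is_cycle S cs \<longleftrightarrow> (\<forall>t. Suc t < length cs \<longrightarrow> linked S (cs ! t) (cs ! Suc t)) \<and> linked S (last cs) (hd
      cs)"

lemma is_cycle_shortcut:
  assumes cyc: "is_cycle S (c0 # c1 # c2 # rest)" and c1: "c1 \<notin> set (c0 # c2 # rest)"
    and "rest \<noteq> []"
    and S': "\<And>u v. linked S u v \<Longrightarrow> u \<noteq> c1 \<Longrightarrow> v \<noteq> c1 \<Longrightarrow> linked S' u v" and "linked S' c0 c2"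
  shows "is_cycle S' (c0 # c2 # rest)"
  unfolding is_cycle_def
proof (intro conjI allI impI)
  fix t assume t: "Suc t < length (c0 # c2 # rest)"
  show "linked S' ((c0 # c2 # rest) ! t) ((c0 # c2 # rest) ! Suc t)"
  proof (cases t)
    case (Suc t')
    have "Suc (Suc t) < length (c0 # c1 # c2 # rest)" using t by simp
    then have "linked S ((c0 # c1 # c2 # rest) ! Suc t) ((c0 # c1 # c2 # rest) ! Suc (Suc t))"
      using cyc unfolding is_cycle_def by blast
    moreover have "(c0 # c1 # c2 # rest) ! Suc t = (c2 # rest) ! t'"
      "(c0 # c1 # c2 # rest) ! Suc (Suc t) = (c2 # rest) ! Suc t'" using Suc by simp_all
    moreover have "t' < length (c2 # rest)" "Suc t' < length (c2 # rest)" using Suc t by simp_all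
    then have "(c2 # rest) ! t' \<in> set (c2 # rest)" "(c2 # rest) ! Suc t' \<in> set (c2 # rest)"
      by (simp_all only: nth_mem)
    ultimately show ?thesis using S' c1 Suc by auto
  qed (use \<open>linked S' c0 c2\<close> in simp)
next
  have "linked S (last (c0 # c1 # c2 # rest)) c0" using cyc by (simp add: is_cycle_def)
  moreover have "last (c0 # c2 # rest) = last (c0 # c1 # c2 # rest)" "last (c0 # c2 # rest) \<noteq> c1"
    using \<open>rest \<noteq> []\<close> c1 by (auto dest: last_in_set)
  ultimately show "linked S' (last (c0 # c2 # rest)) (hd (c0 # c2 # rest))" using S' c1 by auto
qed

lemma mono_in_ideal_deg_if_cycle:
  assumes "distinct cs" "length cs \<ge> 3" "set cs \<subseteq> {1..n}" "S \<subseteq> gens n" "is_cycle S cs"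
  shows "mono S \<in> ideal_deg n (card S)"
  using assms
proof (induction "length cs" arbitrary: cs S rule: less_induct)
  case less
  obtain c0 c1 c2 rest where cs: "cs = c0 # c1 # c2 # rest"
    using less.prems(2) by (metis Suc_le_length_iff numeral_3_eq_3)
  have dist: "c0 \<noteq> c1" "c1 \<noteq> c2" "c0 \<noteq> c2" "c1 \<notin> set rest" "c0 \<notin> set rest" "c2 \<notin> set rest"
    using less.prems(1) cs by auto
  have c: "c0 \<in> {1..n}" "c1 \<in> {1..n}" "c2 \<in> {1..n}" using less.prems(3) cs by auto
  have "linked S c0 c1" "linked S c1 c2" using less.prems(5) cs by (auto simp: is_cycle_def)
  then obtain e0 e1 where e: "e0 \<in> S" "e1 \<in> S" "e0 = (c0, c1) \<or> e0 = (c1, c0)"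
    "e1 = (c1, c2) \<or> e1 = (c2, c1)"
    by (auto simp: linked_def)
  define A where "A = S - {e0, e1}"
  have S: "S = insert e0 (insert e1 A)" using e by (auto simp: A_def)
  have A: "A \<subseteq> gens n" "finite A" "e0 \<notin> A" "e1 \<notin> A"
    using less.prems(4) finite_subset[OF less.prems(4) finite_gens] by (auto simp: A_def)
  have card_S: "card S = card A + 2" unfolding S using A e dist by auto
  have linked_A: "linked A u v" if "linked S u v" "u \<noteq> c1" "v \<noteq> c1" for u v
    using that e by (auto simp: linked_def A_def)
  have "mono (insert x (insert y A)) \<in> ideal_deg n (card A + 2)"
    if x: "x \<in> {(c0, c2), (c2, c0)}" and y: "y \<in> gens n" and xy: "fresh_pair A x y" for x y
  proof -
    define S' where "S' = insert x (insert y A)"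
    have "card S' = card A + 2" using xy A by (auto simp: S'_def fresh_pair_def)
    moreover have S'g: "S' \<subseteq> gens n" using x y A c dist by (auto simp: S'_def gens_def)
    moreover have linked_S': "linked S' u v" if "linked S u v" "u \<noteq> c1" "v \<noteq> c1" for u v
      using linked_A[OF that] by (auto simp: linked_def S'_def)
    moreover have "mono S' \<in> ideal_deg n (card S')"
    proof (cases "rest = []")
      case True
      have "linked S c2 c0" using less.prems(5) cs True by (simp add: is_cycle_def)
      then have "linked A c2 c0" using linked_A dist by blast
      then have "(c0, c2) \<in> S'" "(c2, c0) \<in> S'"
        using x xy by (auto simp: linked_def S'_def fresh_pair_def)
      then show ?thesis using mono_in_ideal_deg_if_2_cycle[OF S'g] by blast
    next
      case False
      have "is_cycle S' (c0 # c2 # rest)"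
        by (rule is_cycle_shortcut[OF less.prems(5)[unfolded cs] _ False linked_S'])
          (use dist x in \<open>auto simp: linked_def S'_def\<close>)
      moreover have "length (c0 # c2 # rest) < length cs" "3 \<le> length (c0 # c2 # rest)"
        using False cs by (auto simp: Suc_le_eq)
      moreover have "distinct (c0 # c2 # rest)" "set (c0 # c2 # rest) \<subseteq> {1..n}"
        using less.prems(1,3) cs by auto
      ultimately show ?thesis using less.hyps[OF _ _ _ _ S'g] by blast
    qed
    ultimately show ?thesis by (simp add: S'_def)
  qed
  then show ?case
    unfolding card_S unfolding S
      by (rule mono_in_ideal_deg_if_chord[OF c dist(1-3) A(1,2) e(3) A(3) e(4) A(4)])
qed

section \<open>Edge monomials span modulo the ideal\<close>

text \<open>
  The vertices in Z must stay singleton blocks: the induction in wedge_r_two_blocks detaches a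
  vertex as a singleton and must still find it as a singleton when it reattaches it.
\<close>

definition edge_span :: "nat \<Rightarrow> nat \<Rightarrow> nat set \<Rightarrow> ext set" where
  "edge_span n k Z = V.span
     ({mono (edges P) | P. lah_partition n P \<and> card P + k = n \<and> Z \<subseteq> singletons P} \<union> ideal_deg n k)"

lemma edge_span_edges:
  "lah_partition n P \<Longrightarrow> card P + k = n \<Longrightarrow> Z \<subseteq> singletons P \<Longrightarrow> mono (edges P) \<in> edge_span n k Z"
  unfolding edge_span_def by (rule V.span_base) blast

lemma ideal_deg_subset_edge_span: "ideal_deg n k \<subseteq> edge_span n k Z"
  unfolding edge_span_def using V.span_superset by blast

lemma edge_span_antimono: "Z' \<subseteq> Z \<Longrightarrow> edge_span n k Z \<subseteq> edge_span n k Z'"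
  unfolding edge_span_def by (rule V.span_mono) blast

lemma wedge_r_mono_in_span_iff:
  assumes "finite S" "(a, b) \<notin> S"
  shows "wedge (r a b) (mono S) \<in> V.span X \<longleftrightarrow> mono (insert (a, b) S) \<in> V.span X"
  using wedge_r_mono[OF assms] span_qscale_iff[OF wsign_nonzero] by simp

lemma wedge_r_mono_in_edge_span_iff:
  "finite S \<Longrightarrow> (a, b) \<notin> S
    \<Longrightarrow> wedge (r a b) (mono S) \<in> edge_span n k Z \<longleftrightarrow> mono (insert (a, b) S) \<in> edge_span n k Z"
  unfolding edge_span_def by (rule wedge_r_mono_in_span_iff)

lemma edge_span_reduction:
  assumes A: "A \<subseteq> gens n" "card A + 2 = k" "finite A"
    and q: "wedge (r a1 b1) (r a2 b2) - (wedge (r a3 b3) (r a4 b4) - wedge (r a5 b5) (r a6 b6)) \<in> rels n"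
  shows "\<lbrakk>fresh_pair A (a1, b1) (a2, b2);
      fresh_pair A (a3, b3) (a4, b4) \<Longrightarrow> pair_mono A (a3, b3) (a4, b4) \<in> edge_span n k Z;
      fresh_pair A (a5, b5) (a6, b6) \<Longrightarrow> pair_mono A (a5, b5) (a6, b6) \<in> edge_span n k Z\<rbrakk>
      \<Longrightarrow> pair_mono A (a1, b1) (a2, b2) \<in> edge_span n k Z"
proof -
  have I: "ideal_deg n k \<subseteq> V.span ({mono (edges P) | P. lah_partition n P \<and> card P + k = n \<and> Z \<subseteq>
      singletons P} \<union> ideal_deg n k)"
    by (rule subset_trans[OF _ V.span_superset]) blast
  show "fresh_pair A (a1, b1) (a2, b2) \<Longrightarrow> (fresh_pair A (a3, b3) (a4, b4) \<Longrightarrow> pair_mono A (a3, b3) (a4,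
      b4) \<in> edge_span n k Z)
      \<Longrightarrow> (fresh_pair A (a5, b5) (a6, b6) \<Longrightarrow> pair_mono A (a5, b5) (a6, b6) \<in> edge_span n k Z) \<Longrightarrow>
          pair_mono A (a1, b1) (a2, b2) \<in> edge_span n k Z"
    unfolding edge_span_def by (rule pair_mono_reduction(1)[OF A(1,2,3) q I])
qed

lemma wedge_r_to_singleton:
  assumes "lah_partition n P" "zs \<in> P" "zs = pre @ u # post" "[v] \<in> P" "u \<noteq> v" "card P + k = n"
  shows "wedge (r u v) (mono (edges P)) \<in> edge_span n (Suc k) (singletons P - {u, v})"
  using assms
proof (induction post arbitrary: pre u k)
  case Nil
  have zv: "zs \<noteq> [v]" using Nil by auto
  define P' where "P' = insert (zs @ [v]) (P - {zs, [v]})"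
  note J = lah_partition_join[OF Nil.prems(1,2,4) zv, folded P'_def]
  have uv: "(u, v) \<notin> edges P" using edges_avoid_singleton[OF Nil.prems(1,4)] by blast
  have eq: "edges P' = insert (u, v) (edges P)" using J(3) Nil.prems(3) by simp
  have Z: "singletons P - {u, v} \<subseteq> singletons P'"
  proof
    fix y assume y: "y \<in> singletons P - {u, v}"
    have "y \<notin> set zs" using not_singleton_if_in_long_block[OF Nil.prems(1,2), of y u] y Nil.prems(3)
      by auto
    then show "y \<in> singletons P'" using J(5) y by auto
  qed
  have "mono (edges P') \<in> edge_span n (Suc k) (singletons P - {u, v})"
    using edge_span_edges[OF J(1) _ Z] J(2) Nil.prems(6) by simp
  then show ?case using wedge_r_mono_in_edge_span_iff[OF finite_edges[OF Nil.prems(1)] uv] eq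
    by simp
next
  case (Cons w post')
  note P = Cons.prems(1) and zs = Cons.prems(2) and v = Cons.prems(4)
  txt \<open>Split zs between u and its successor w and use the relation
    r_uv r_uw = r_uv r_vw - r_uw r_wv: the first term on the right inserts v between u and w,
    the second is handled by induction.\<close>
  have split: "zs = (pre @ [u]) @ (w # post')" using Cons.prems(3) by simp
  define P0 where "P0 = insert (pre @ [u]) (insert (w # post') (P - {zs}))"
  note Sp = lah_partition_split[OF P zs split _ _, folded P0_def, simplified]
  obtain P2 where P2: "lah_partition n P2" "card P2 + 1 = card P"
    "edges P2 = insert (u, v) (insert (v, w) (edges P0))" "singletons P - {v} \<subseteq> singletons P2"
    by (rule lah_partition_insert_singleton[OF P zs split _ _ v, folded P0_def]) auto
  have v_edges: "(u, v) \<notin> edges P" "(w, v) \<notin> edges P" "(v, w) \<notin> edges P"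
    using edges_avoid_singleton[OF P v] by blast+
  have uw: "u \<noteq> w" "w \<noteq> v" "(u, w) \<in> edges P" using Sp(3) v_edges edges_subset_gens[OF P]
    by (auto simp: gens_def)
  have inn: "u \<in> {1..n}" "v \<in> {1..n}" "w \<in> {1..n}"
    using lah_partition_range[OF P zs] lah_partition_range[OF P v] split by auto
  have card: "card (edges P0) + 2 = Suc k" using card_edges[OF Sp(1)] Sp(2) Cons.prems(6) by simp
  have same: "singletons P - {u, v} = singletons P - {w, v}"
    using not_singleton_if_in_long_block[OF P zs, of u w] not_singleton_if_in_long_block[OF P zs, of
      w u]
      split uw by auto
  have q: "wedge (r u v) (r u w) - (wedge (r u v) (r v w) - wedge (r u w) (r w v)) \<in> rels n"
    by (rule rels_1I) (use inn uw Cons.prems(5) in auto)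
  have "card P2 + Suc k = n" using P2(2) Cons.prems(6) by simp
  moreover have "singletons P - {u, v} \<subseteq> singletons P2" using P2(4) by blast
  ultimately have "mono (edges P2) \<in> edge_span n (Suc k) (singletons P - {u, v})"
    by (rule edge_span_edges[OF P2(1)])
  then have M2: "pair_mono (edges P0) (u, v) (v, w) \<in> edge_span n (Suc k) (singletons P - {u, v})"
    using P2(3) by (simp add: pair_mono_def)
  moreover have M3: "pair_mono (edges P0) (u, w) (w, v) \<in> edge_span n (Suc k) (singletons P - {u,
      v})"
  proof -
    have "wedge (r w v) (mono (edges P)) \<in> edge_span n (Suc k) (singletons P - {w, v})"
      by (rule Cons.IH[OF P zs split v uw(2) Cons.prems(6)])
    then have "mono (insert (w, v) (edges P)) \<in> edge_span n (Suc k) (singletons P - {w, v})"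
      using wedge_r_mono_in_edge_span_iff[OF finite_edges[OF P] v_edges(2)] by simp
    then show ?thesis using Sp(3) same by (simp add: pair_mono_def insert_commute)
  qed
  have "fresh_pair (edges P0) (u, v) (u, w)" using v_edges uw Sp(3,4) by (auto simp: fresh_pair_def)
  then have "pair_mono (edges P0) (u, v) (u, w) \<in> edge_span n (Suc k) (singletons P - {u, v})"
    using edge_span_reduction[OF edges_subset_gens[OF Sp(1)] card finite_edges[OF Sp(1)] q] M2 M3
      by blast
  then have "mono (insert (u, v) (edges P)) \<in> edge_span n (Suc k) (singletons P - {u, v})"
    using Sp(3) by (simp add: pair_mono_def)
  then show ?case using wedge_r_mono_in_edge_span_iff[OF finite_edges[OF P] v_edges(1)] by simp
qed

lemma wedge_r_from_singleton:
  assumes "lah_partition n P" "zs \<in> P" "zs = pre @ u # post" "[v] \<in> P" "u \<noteq> v" "card P + k = n"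
  shows "wedge (r v u) (mono (edges P)) \<in> edge_span n (Suc k) (singletons P - {u, v})"
  using assms
proof (induction pre arbitrary: u post k rule: rev_induct)
  case Nil
  have zv: "[v] \<noteq> zs" using Nil by auto
  define P' where "P' = insert ([v] @ zs) (P - {[v], zs})"
  note J = lah_partition_join[OF Nil.prems(1,4,2) zv, folded P'_def]
  have uv: "(v, u) \<notin> edges P" using edges_avoid_singleton[OF Nil.prems(1,4)] by blast
  have eq: "edges P' = insert (v, u) (edges P)" using J(3) Nil.prems(3) by simp
  have Z: "singletons P - {u, v} \<subseteq> singletons P'"
  proof
    fix y assume y: "y \<in> singletons P - {u, v}"
    have "y \<notin> set zs" using not_singleton_if_in_long_block[OF Nil.prems(1,2), of y u] y Nil.prems(3)
      by auto
    then show "y \<in> singletons P'" using J(5) y by auto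
  qed
  have "mono (edges P') \<in> edge_span n (Suc k) (singletons P - {u, v})"
    using edge_span_edges[OF J(1) _ Z] J(2) Nil.prems(6) by simp
  then show ?case using wedge_r_mono_in_edge_span_iff[OF finite_edges[OF Nil.prems(1)] uv] eq
    by simp
next
  case (snoc w pre')
  note P = snoc.prems(1) and zs = snoc.prems(2) and v = snoc.prems(4)
  txt \<open>Mirror image of the previous proof, with the relation
    r_wu r_vu = r_wv r_vu - r_vw r_wu.\<close>
  have split: "zs = (pre' @ [w]) @ (u # post)" using snoc.prems(3) by simp
  define P0 where "P0 = insert (pre' @ [w]) (insert (u # post) (P - {zs}))"
  note Sp = lah_partition_split[OF P zs split _ _, folded P0_def, simplified]
  obtain P2 where P2: "lah_partition n P2" "card P2 + 1 = card P"
    "edges P2 = insert (w, v) (insert (v, u) (edges P0))" "singletons P - {v} \<subseteq> singletons P2"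
    by (rule lah_partition_insert_singleton[OF P zs split _ _ v, folded P0_def]) auto
  have v_edges: "(v, u) \<notin> edges P" "(w, v) \<notin> edges P" "(v, w) \<notin> edges P"
    using edges_avoid_singleton[OF P v] by blast+
  have uw: "u \<noteq> w" "w \<noteq> v" "(w, u) \<in> edges P" using Sp(3) v_edges edges_subset_gens[OF P]
    by (auto simp: gens_def)
  have inn: "u \<in> {1..n}" "v \<in> {1..n}" "w \<in> {1..n}"
    using lah_partition_range[OF P zs] lah_partition_range[OF P v] split by auto
  have card: "card (edges P0) + 2 = Suc k" using card_edges[OF Sp(1)] Sp(2) snoc.prems(6) by simp
  have same: "singletons P - {u, v} = singletons P - {w, v}"
    using not_singleton_if_in_long_block[OF P zs, of u w] not_singleton_if_in_long_block[OF P zs, of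
      w u]
      split uw by auto
  have q: "wedge (r w u) (r v u) - (wedge (r w v) (r v u) - wedge (r v w) (r w u)) \<in> rels n"
    by (rule rels_2I) (use inn uw snoc.prems(5) in auto)
  have "card P2 + Suc k = n" using P2(2) snoc.prems(6) by simp
  moreover have "singletons P - {u, v} \<subseteq> singletons P2" using P2(4) by blast
  ultimately have "mono (edges P2) \<in> edge_span n (Suc k) (singletons P - {u, v})"
    by (rule edge_span_edges[OF P2(1)])
  then have M2: "pair_mono (edges P0) (w, v) (v, u) \<in> edge_span n (Suc k) (singletons P - {u, v})"
    using P2(3) by (simp add: pair_mono_def)
  moreover have M3: "pair_mono (edges P0) (v, w) (w, u) \<in> edge_span n (Suc k) (singletons P - {u,
      v})"
  proof -
    have "wedge (r v w) (mono (edges P)) \<in> edge_span n (Suc k) (singletons P - {w, v})"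
      by (rule snoc.IH[OF P zs _ v uw(2) snoc.prems(6)]) (use split in simp)
    then have "mono (insert (v, w) (edges P)) \<in> edge_span n (Suc k) (singletons P - {w, v})"
      using wedge_r_mono_in_edge_span_iff[OF finite_edges[OF P] v_edges(3)] by simp
    then show ?thesis using Sp(3) same by (simp add: pair_mono_def)
  qed
  have "fresh_pair (edges P0) (w, u) (v, u)" using v_edges uw Sp(3,4) by (auto simp: fresh_pair_def)
  then have "pair_mono (edges P0) (w, u) (v, u) \<in> edge_span n (Suc k) (singletons P - {u, v})"
    using edge_span_reduction[OF edges_subset_gens[OF Sp(1)] card finite_edges[OF Sp(1)] q] M2 M3
      by blast
  then have "mono (insert (v, u) (edges P)) \<in> edge_span n (Suc k) (singletons P - {u, v})"
    using Sp(3) by (simp add: pair_mono_def insert_commute)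
  then show ?case using wedge_r_mono_in_edge_span_iff[OF finite_edges[OF P] v_edges(1)] by simp
qed

lemma wedge_r_ideal_deg:
  assumes g: "(a, b) \<in> gens n" and x: "x \<in> ideal_deg n k"
  shows "wedge (r a b) x \<in> ideal_deg n (Suc k)"
proof -
  have hy: "wedge (r a b) y \<in> V.span (ideal_deg n (Suc k))"
    if y: "y \<in> {wedge (wedge (mono A) q) (mono B) | A B q.
        A \<subseteq> gens n \<and> B \<subseteq> gens n \<and> card A + card B + 2 = k \<and> q \<in> rels n}" for y
  proof -
    obtain A B q where y': "y = wedge (wedge (mono A) q) (mono B)" "A \<subseteq> gens n" "B \<subseteq> gens n"
        "card A + card B + 2 = k" "q \<in> rels n" using y by blast
    have fA: "finite A" using y'(2) finite_gens finite_subset by blast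
    have e: "wedge (r a b) y = wedge (wedge (wedge (r a b) (mono A)) q) (mono B)"
      using y'(1) by (simp add: wedge_assoc)
    show ?thesis
    proof (cases "(a, b) \<in> A")
      case True
      then show ?thesis using e wedge_r_mono_member[OF fA True] by (simp add: V.span_zero)
    next
      case False
      have cI: "card (insert (a, b) A) + card B + 2 = Suc k" using y'(4) fA False by simp
      have sI: "insert (a, b) A \<subseteq> gens n" using g y'(2) by simp
      have "wedge (wedge (mono (insert (a, b) A)) q) (mono B) \<in> ideal_deg n (Suc k)"
        unfolding ideal_deg_def
        by (rule V.span_base) (use y'(3,5) cI sI in blast)
      then have "wedge (wedge (mono (insert (a, b) A)) q) (mono B) \<in> V.span (ideal_deg n (Suc k))"
        by (simp add: span_ideal_deg)
      then have "qscale (wsign {(a, b)} A) (wedge (wedge (mono (insert (a, b) A)) q) (mono B)) \<in>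
          V.span (ideal_deg n (Suc k))"
        by (rule V.span_scale)
      then show ?thesis using e wedge_r_mono[OF fA False] by (simp add: wedge_scale_left)
    qed
  qed
  have x': "x \<in> V.span {wedge (wedge (mono A) q) (mono B) | A B q.
        A \<subseteq> gens n \<and> B \<subseteq> gens n \<and> card A + card B + 2 = k \<and> q \<in> rels n}"
    using x unfolding ideal_deg_def .
  have "wedge (r a b) x \<in> V.span (ideal_deg n (Suc k))" by (rule wedge_in_span_right[OF hy x'])
  then show ?thesis by (simp add: span_ideal_deg)
qed

lemma wedge_r_edge_span:
  assumes g: "(c, d) \<in> gens n" and x: "x \<in> edge_span n K Z0"
    and gen: "\<And>P'. \<lbrakk>lah_partition n P'; card P' + K = n; Z0 \<subseteq> singletons P'\<rbrakk>
      \<Longrightarrow> wedge (r c d) (mono (edges P')) \<in> edge_span n (Suc K) Z"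
  shows "wedge (r c d) x \<in> edge_span n (Suc K) Z"
proof -
  have hy: "wedge (r c d) y \<in> edge_span n (Suc K) Z"
    if "y \<in> {mono (edges P) | P. lah_partition n P \<and> card P + K = n \<and> Z0 \<subseteq> singletons P} \<union> ideal_deg
        n K" for y
    using that gen wedge_r_ideal_deg[OF g] ideal_deg_subset_edge_span by blast
  show ?thesis using wedge_in_span_right[OF hy[unfolded edge_span_def[of n "Suc K" Z]] x[unfolded
    edge_span_def]]
    unfolding edge_span_def .
qed

lemma edge_span_neg_scale: "x \<in> edge_span n k Z \<Longrightarrow> - qscale c x \<in> edge_span n k Z"
  unfolding edge_span_def by (intro V.span_neg V.span_scale)

lemma wedge_r_mono_insert_in_edge_span:
  assumes "finite E" "(y, z) \<notin> E" "(y, z) \<in> gens n"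
    and "wedge (r a b) (mono E) \<in> edge_span n k Z0"
    and "\<And>P'. lah_partition n P' \<Longrightarrow> card P' + k = n \<Longrightarrow> Z0 \<subseteq> singletons P'
      \<Longrightarrow> wedge (r y z) (mono (edges P')) \<in> edge_span n (Suc k) Z"
  shows "wedge (r a b) (mono (insert (y, z) E)) \<in> edge_span n (Suc k) Z"
proof -
  have "wedge (r y z) (wedge (r a b) (mono E)) \<in> edge_span n (Suc k) Z"
    using wedge_r_edge_span assms(3-5) by blast
  moreover have "wedge (r a b) (mono (insert (y, z) E))
      = - qscale (wsign {(y, z)} E) (wedge (r y z) (wedge (r a b) (mono E)))"
    unfolding mono_insert[OF assms(1,2)] wedge_scale_right wedge_r_swap[of a b y z]
    by (simp only: V.scale_minus_right)
  ultimately show ?thesis using edge_span_neg_scale by simp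
qed

lemma wedge_r_two_blocks:
  assumes "lah_partition n P" "xs \<in> P" "ys \<in> P" "xs \<noteq> ys" "a \<in> set xs" "b \<in> set ys" "card P + k = n"
  shows "wedge (r a b) (mono (edges P)) \<in> edge_span n (Suc k) (singletons P - {a, b})"
  using assms
proof (induction "length ys" arbitrary: P ys k rule: less_induct)
  case less
  note P = less.prems(1) and xs = less.prems(2) and ys = less.prems(3)
  have disj: "set xs \<inter> set ys = {}" using lah_partitionD(3)[OF P xs ys less.prems(4)] .
  have dys: "distinct ys" using lah_partitionD(2)[OF P ys] .
  have inn: "v \<in> {1..n}" if "v \<in> set ys" for v using lah_partition_range[OF P ys that] .
  have a_ys: "a \<notin> set ys" using disj less.prems(5) by auto
  txt \<open>Detach an end vertex y of ys that differs from b, with neighbour z; by induction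
    r_ab can be moved into the edge span of the smaller partition, and then r_zy or r_yz
    reattaches the singleton y.\<close>
  consider "ys = [b]" | ys0 y where "ys = ys0 @ [y]" "b \<in> set ys0" | y ys1
    where "ys = y # ys1" "b \<in> set ys1"
    using less.prems(6) by (rule split_list_at_member)
  then show ?case
  proof cases
    case 1
    obtain pre post where "xs = pre @ a # post" using less.prems(5) by (meson split_list)
    then show ?thesis
      using wedge_r_to_singleton[OF P xs _ ys[unfolded 1] _ less.prems(7)] a_ys 1 by simp
  next
    case (2 ys0 y)
    define z where "z = last ys0"
    have ys0: "ys0 \<noteq> []" using 2 by auto
    have z: "z \<in> set ys0" "z \<noteq> y" using dys 2 ys0 by (auto simp: z_def)
    have yb: "y \<noteq> a" "y \<noteq> b" using a_ys dys 2 by auto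
    define P0 where "P0 = insert ys0 (insert [y] (P - {ys}))"
    note Sp = lah_partition_split[OF P ys 2(1) ys0, simplified, folded P0_def z_def]
    have k: "k = Suc (card (edges P0))"
      using card_edges[OF P] less.prems(7) Sp(3,4) finite_edges[OF Sp(1)] by simp
    have "xs \<in> P0" "ys0 \<in> P0" "xs \<noteq> ys0" using xs less.prems(4,5) disj 2 by (auto simp: P0_def)
    moreover have "length ys0 < length ys" "card P0 + card (edges P0) = n"
      using 2 Sp(2) less.prems(7) k by simp_all
    ultimately have "wedge (r a b) (mono (edges P0)) \<in> edge_span n (Suc (card (edges P0)))
        (singletons P0 - {a, b})"
      using less.hyps[OF _ Sp(1) _ _ _ less.prems(5) 2(2)] by presburger
    then have IH: "wedge (r a b) (mono (edges P0)) \<in> edge_span n k (singletons P0 - {a, b})"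
      unfolding k .
    show ?thesis unfolding Sp(3)
    proof (rule wedge_r_mono_insert_in_edge_span[OF finite_edges[OF Sp(1)] Sp(4) _ IH])
      show "(z, y) \<in> gens n" using inn z 2 by (auto simp: gens_def)
      fix P' assume P': "lah_partition n P'" "card P' + k = n"
        "singletons P0 - {a, b} \<subseteq> singletons P'"
      have "y \<in> singletons P0" by (simp add: singletons_def P0_def)
      then have y: "[y] \<in> P'" using P'(3) yb by (auto simp: singletons_def)
      have "z \<in> {1..n}" using inn z 2 by simp
      then obtain zs where zs: "zs \<in> P'" "z \<in> set zs" using lah_partition_cover[OF P'(1)] by blast
      then obtain pre post where "zs = pre @ z # post" by (meson split_list)
      then have "wedge (r z y) (mono (edges P')) \<in> edge_span n (Suc k) (singletons P' - {z, y})"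
        by (rule wedge_r_to_singleton[OF P'(1) zs(1) _ y z(2) P'(2)])
      moreover have "singletons P - {a, b} \<subseteq> singletons P' - {z, y}"
        by (rule singletons_subset_after_split[OF P ys _ _ _ Sp(5) P'(3)]) (use z 2 in auto)
      ultimately show "wedge (r z y) (mono (edges P')) \<in> edge_span n (Suc k) (singletons P - {a,
          b})"
        using edge_span_antimono by blast
    qed
  next
    case (3 y ys1)
    define z where "z = hd ys1"
    have ys1: "ys1 \<noteq> []" using 3 by auto
    have z: "z \<in> set ys1" "z \<noteq> y" using dys 3 ys1 by (auto simp: z_def)
    have yb: "y \<noteq> a" "y \<noteq> b" using a_ys dys 3 by auto
    define P0 where "P0 = insert [y] (insert ys1 (P - {ys}))"
    have "ys = [y] @ ys1" using 3 by simp
    note Sp = lah_partition_split[OF P ys this _ ys1, simplified, folded P0_def z_def]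
    have k: "k = Suc (card (edges P0))"
      using card_edges[OF P] less.prems(7) Sp(3,4) finite_edges[OF Sp(1)] by simp
    have "xs \<in> P0" "ys1 \<in> P0" "xs \<noteq> ys1" using xs less.prems(4,5) disj 3 by (auto simp: P0_def)
    moreover have "length ys1 < length ys" "card P0 + card (edges P0) = n"
      using 3 Sp(2) less.prems(7) k by simp_all
    ultimately have "wedge (r a b) (mono (edges P0)) \<in> edge_span n (Suc (card (edges P0)))
        (singletons P0 - {a, b})"
      using less.hyps[OF _ Sp(1) _ _ _ less.prems(5) 3(2)] by presburger
    then have IH: "wedge (r a b) (mono (edges P0)) \<in> edge_span n k (singletons P0 - {a, b})"
      unfolding k .
    show ?thesis unfolding Sp(3)
    proof (rule wedge_r_mono_insert_in_edge_span[OF finite_edges[OF Sp(1)] Sp(4) _ IH])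
      show "(y, z) \<in> gens n" using inn z 3 by (auto simp: gens_def)
      fix P' assume P': "lah_partition n P'" "card P' + k = n"
        "singletons P0 - {a, b} \<subseteq> singletons P'"
      have "y \<in> singletons P0" by (simp add: singletons_def P0_def)
      then have y: "[y] \<in> P'" using P'(3) yb by (auto simp: singletons_def)
      have "z \<in> {1..n}" using inn z 3 by simp
      then obtain zs where zs: "zs \<in> P'" "z \<in> set zs" using lah_partition_cover[OF P'(1)] by blast
      then obtain pre post where "zs = pre @ z # post" by (meson split_list)
      then have "wedge (r y z) (mono (edges P')) \<in> edge_span n (Suc k) (singletons P' - {z, y})"
        by (rule wedge_r_from_singleton[OF P'(1) zs(1) _ y z(2) P'(2)])
      moreover have "singletons P - {a, b} \<subseteq> singletons P' - {z, y}"
        by (rule singletons_subset_after_split[OF P ys _ _ _ Sp(5) P'(3)]) (use z 3 in auto)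
      ultimately show "wedge (r y z) (mono (edges P')) \<in> edge_span n (Suc k) (singletons P - {a,
          b})"
        using edge_span_antimono by blast
    qed
  qed
qed

lemma mono_insert_same_block:
  assumes P: "lah_partition n P" and xs: "xs \<in> P" and a: "a \<in> set xs" and b: "b \<in> set xs"
    and ab: "a \<noteq> b"
    and nin: "(a, b) \<notin> edges P"
  shows "mono (insert (a, b) (edges P)) \<in> ideal_deg n (card (insert (a, b) (edges P)))"
proof -
  define S where "S = insert (a, b) (edges P)"
  have dx: "distinct xs" using lah_partitionD(2)[OF P xs] .
  obtain i where i: "i < length xs" "xs ! i = a" using a by (meson in_set_conv_nth)
  obtain j where j: "j < length xs" "xs ! j = b" using b by (meson in_set_conv_nth)
  have ij: "i \<noteq> j" using i j ab by auto
  have Sg: "S \<subseteq> gens n" unfolding S_def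
    using edges_subset_gens[OF P] lah_partition_range[OF P xs] a b ab
    by (auto simp: gens_def)
  have eP: "(xs ! t, xs ! Suc t) \<in> S" if "Suc t < length xs" for t
  proof -
    have "(xs ! t, xs ! Suc t) \<in> list_edges xs" using that by (auto simp: list_edges_nth)
    then show ?thesis using list_edges_subset_edges[OF xs] unfolding S_def by blast
  qed
  show ?thesis
  proof (cases "i = Suc j")
    case True
    have "(b, a) \<in> S" using eP[of j] True i j by simp
    moreover have "(a, b) \<in> S" by (simp add: S_def)
    ultimately show ?thesis using mono_in_ideal_deg_if_2_cycle[OF Sg] unfolding S_def by blast
  next
    case False
    have jSi: "j \<noteq> Suc i"
    proof
      assume "j = Suc i" then have "(a, b) \<in> list_edges xs" using i j by (auto simp: list_edges_nth)
      then show False using nin list_edges_subset_edges[OF xs] by blast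
    qed
    define l where "l = min i j"
    define h where "h = max i j"
    have lh: "l + 2 \<le> h" "h < length xs" using ij False jSi i j by (auto simp: l_def h_def)
    define cs where "cs = map (\<lambda>t. xs ! t) [l..<Suc h]"
    have len: "length cs = Suc h - l" using lh by (simp add: cs_def Suc_diff_le)
    have cs_nth: "cs ! t = xs ! (l + t)" if "t < Suc h - l" for t using that
      by (simp add: cs_def del: upt_Suc)
    have dcs: "distinct cs" unfolding cs_def
      by (rule distinct_map[THEN iffD2]) (use dx lh in \<open>auto simp: inj_on_def nth_eq_iff_index_eq\<close>)
    have scs: "set cs \<subseteq> {1..n}" using lah_partition_range[OF P xs] lh by (auto simp: cs_def)
    have cy: "is_cycle S cs" unfolding is_cycle_def
    proof (intro conjI allI impI)
      fix t assume t: "Suc t < length cs"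
      have "(xs ! (l + t), xs ! Suc (l + t)) \<in> S" using eP[of "l + t"] t len lh by simp
      then show "linked S (cs ! t) (cs ! Suc t)" using t len cs_nth by (simp add: linked_def)
    next
      have "last cs = xs ! h" "hd cs = xs ! l" using lh by (simp_all add: cs_def last_map hd_map)
      moreover have "{xs ! h, xs ! l} = {a, b}" using i j
        by (auto simp: l_def h_def max_def min_def)
      ultimately show "linked S (last cs) (hd cs)" by (auto simp: linked_def S_def doubleton_eq_iff)
    qed
    have "mono S \<in> ideal_deg n (card S)"
      by (rule mono_in_ideal_deg_if_cycle[OF dcs _ scs Sg cy]) (use len lh in simp)
    then show ?thesis by (simp add: S_def)
  qed
qed

lemma wedge_r_edges:
  assumes P: "lah_partition n P" and c: "card P + k = n" and a: "a \<in> {1..n}" and b: "b \<in> {1..n}"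
    and ab: "a \<noteq> b"
  shows "wedge (r a b) (mono (edges P)) \<in> edge_span n (Suc k) {}"
proof -
  obtain xs where xs: "xs \<in> P" "a \<in> set xs" using lah_partition_cover[OF P a] by blast
  obtain ys where ys: "ys \<in> P" "b \<in> set ys" using lah_partition_cover[OF P b] by blast
  show ?thesis
  proof (cases "xs = ys")
    case False
    show ?thesis using wedge_r_two_blocks[OF P xs(1) ys(1) False xs(2) ys(2) c]
      edge_span_antimono[of "{}"] by blast
  next
    case True
    show ?thesis
    proof (cases "(a, b) \<in> edges P")
      case True
      then show ?thesis using wedge_r_mono_member[OF finite_edges[OF P] True]
        by (simp add: edge_span_def V.span_zero)
    next
      case nin: False
      have cS: "card (insert (a, b) (edges P)) = Suc k"
        using card_edges[OF P] c nin finite_edges[OF P] by simp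
      have "mono (insert (a, b) (edges P)) \<in> edge_span n (Suc k) {}"
        using mono_insert_same_block[OF P xs(1) xs(2) _ ab nin] ys True cS
          ideal_deg_subset_edge_span by auto
      then show ?thesis using wedge_r_mono_in_edge_span_iff[OF finite_edges[OF P] nin] by simp
    qed
  qed
qed

lemma mono_in_edge_span:
  assumes "S \<subseteq> gens n"
  shows "mono S \<in> edge_span n (card S) {}"
  using assms
proof (induction "card S" arbitrary: S)
  case 0
  have fS: "finite S" using 0 finite_gens finite_subset by blast
  then have "S = {}" using 0 by simp
  then show ?case using edge_span_edges[OF singleton_partition(1), where k=0
    and Z="{}"] singleton_partition by simp
next
  case (Suc m)
  have fS: "finite S" using Suc finite_gens finite_subset by blast
  obtain e where e: "e \<in> S" using Suc by (metis card.empty ex_in_conv nat.simps(3))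
  obtain a b where eab: "e = (a, b)" by (cases e)
  define S' where "S' = S - {e}"
  have cS': "card S' = m" using Suc e fS by (simp add: S'_def)
  have IH: "mono S' \<in> edge_span n m {}" using Suc.hyps(1)[of S'] cS' Suc.prems
    by (auto simp: S'_def)
  have fS': "finite S'" using fS by (simp add: S'_def)
  have nS': "(a, b) \<notin> S'" using eab by (simp add: S'_def)
  have g: "(a, b) \<in> gens n" using Suc.prems e eab by auto
  have ab: "a \<in> {1..n}" "b \<in> {1..n}" "a \<noteq> b" using g by (auto simp: gens_def)
  have "wedge (r a b) (mono S') \<in> edge_span n (Suc m) {}"
    by (rule wedge_r_edge_span[OF g IH]) (rule wedge_r_edges[OF _ _ ab])
  then have "mono (insert (a, b) S') \<in> edge_span n (Suc m) {}"
    using wedge_r_mono_in_edge_span_iff[OF fS' nS'] by simp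
  moreover have "insert (a, b) S' = S" using e eab by (auto simp: S'_def)
  ultimately show ?case using Suc.hyps(2) by simp
qed

section \<open>Homogeneity of the ideal\<close>

definition monomials :: "nat \<Rightarrow> nat \<Rightarrow> ext set" where
  "monomials n p = {mono S | S. S \<subseteq> gens n \<and> card S = p}"

lemma wedge_mono_in_span_monomials:
  assumes "S \<subseteq> gens n" "T \<subseteq> gens n"
  shows "wedge (mono S) (mono T) \<in> V.span (monomials n (card S + card T))"
proof -
  have f: "finite S" "finite T" using assms finite_gens finite_subset by blast+
  show ?thesis
  proof (cases "S \<inter> T = {}")
    case True
    have "mono (S \<union> T) \<in> monomials n (card S + card T)"
      using assms f True by (auto simp: monomials_def card_Un_disjoint)
    then show ?thesis using f True by (simp add: wedge_mono_mono V.span_scale V.span_base)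
  next
    case False
    then show ?thesis using f by (simp add: wedge_mono_mono V.span_zero)
  qed
qed

lemma wedge_span_monomials:
  assumes x: "x \<in> V.span (monomials n p)" and y: "y \<in> V.span (monomials n q)"
  shows "wedge x y \<in> V.span (monomials n (p + q))"
proof -
  have "wedge s y \<in> V.span (monomials n (p + q))" if s: "s \<in> monomials n p" for s
  proof -
    obtain S where S: "s = mono S" "S \<subseteq> gens n" "card S = p" using s by (auto simp: monomials_def)
    have "wedge s t \<in> V.span (monomials n (p + q))" if t: "t \<in> monomials n q" for t
    proof -
      obtain T where T: "t = mono T" "T \<subseteq> gens n" "card T = q" using t by (auto simp: monomials_def)
      show ?thesis using wedge_mono_in_span_monomials[OF S(2) T(2)] S T by simp
    qed
    then show ?thesis using wedge_in_span_right[OF _ y] by blast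
  qed
  then show ?thesis using wedge_in_span_left[OF _ x] by blast
qed

lemma r_in_span_monomials: "(i, j) \<in> gens n \<Longrightarrow> r i j \<in> V.span (monomials n 1)"
  by (rule V.span_base) (auto simp: monomials_def r_def)

lemma rels_in_span_monomials:
  assumes "q \<in> rels n"
  shows "q \<in> V.span (monomials n 2)"
proof -
  have rr: "wedge (r i j) (r k l) \<in> V.span (monomials n 2)" if "(i, j) \<in> gens n" "(k, l) \<in> gens n"
    for i j k l
    using wedge_span_monomials[OF r_in_span_monomials[OF that(1)] r_in_span_monomials[OF that(2)]]
    by (simp add: numeral_2_eq_2)
  from assms show ?thesis unfolding rels_def
    by (elim UnE CollectE exE conjE) (simp_all add: V.span_diff rr gensI)
qed

lemma ideal_deg_subset_ext_deg: "ideal_deg n k \<subseteq> ext_deg n k"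
proof -
  have "ext_deg n k = V.span (monomials n k)" by (simp add: ext_deg_def monomials_def)
  moreover have "y \<in> V.span (monomials n k)" if y: "y \<in> {wedge (wedge (mono A) q) (mono B) | A B q.
        A \<subseteq> gens n \<and> B \<subseteq> gens n \<and> card A + card B + 2 = k \<and> q \<in> rels n}" for y
  proof -
    obtain A B q where y': "y = wedge (wedge (mono A) q) (mono B)" "A \<subseteq> gens n" "B \<subseteq> gens n"
        "card A + card B + 2 = k" "q \<in> rels n" using y by blast
    have "mono A \<in> V.span (monomials n (card A))"
      by (rule V.span_base) (use y'(2) in \<open>auto simp: monomials_def\<close>)
    moreover have "mono B \<in> V.span (monomials n (card B))"
      by (rule V.span_base) (use y'(3) in \<open>auto simp: monomials_def\<close>)
    ultimately have "y \<in> V.span (monomials n (card A + 2 + card B))"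
      using wedge_span_monomials[OF wedge_span_monomials[OF _ rels_in_span_monomials[OF y'(5)]]]
        y'(1) by blast
    then show ?thesis using y'(4) by (simp add: add.commute add.left_commute)
  qed
  ultimately show ?thesis unfolding ideal_deg_def
    by (metis (no_types, lifting) V.span_minimal V.subspace_span subsetI)
qed

lemma finite_monomials: "finite (monomials n k)"
proof -
  have "monomials n k \<subseteq> mono ` Pow (gens n)" by (auto simp: monomials_def)
  then show ?thesis using finite_gens by (meson finite_Pow_iff finite_imageI finite_subset)
qed

lemma edge_span_empty:
  "edge_span n k {} = V.span ((\<lambda>P. mono (edges P)) ` {P. lah_partition n P \<and> card P + k = n} \<union>
      ideal_deg n k)"
proof -
  have "{mono (edges P) | P. lah_partition n P \<and> card P + k = n \<and> {} \<subseteq> singletons P}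
      = (\<lambda>P. mono (edges P)) ` {P. lah_partition n P \<and> card P + k = n}"
    by auto
  then show ?thesis unfolding edge_span_def by simp
qed

lemma ext_deg_eq_edge_span: "ext_deg n k = edge_span n k {}"
proof
  have "monomials n k \<subseteq> edge_span n k {}"
    using mono_in_edge_span by (auto simp: monomials_def)
  then show "ext_deg n k \<subseteq> edge_span n k {}"
    unfolding ext_deg_def monomials_def[symmetric] edge_span_def by (rule V.span_minimal) simp
  have "mono (edges P) \<in> monomials n k" if "lah_partition n P" "card P + k = n" for P
    using that card_edges edges_subset_gens by (fastforce simp: monomials_def)
  then have "{mono (edges P) | P. lah_partition n P \<and> card P + k = n \<and> {} \<subseteq> singletons P}
      \<union> ideal_deg n k \<subseteq> ext_deg n k"
    using ideal_deg_subset_ext_deg V.span_superset by (fastforce simp: ext_deg_def monomials_def)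
  then show "edge_span n k {} \<subseteq> ext_deg n k"
    unfolding edge_span_def by (rule V.span_minimal) (simp add: ext_deg_def)
qed

theorem corollary5p6:
  fixes n k :: nat
  assumes "k \<le> n - 1" and "1 \<le> n"
  shows "pvb_dual_dim n k = lah n (n - k)"
proof -
  define LP where "LP = {P. lah_partition n P \<and> card P + k = n}"
  have LP: "lah_partitions n (n - k) = LP" using assms by (auto simp: lah_partitions_eq LP_def)
  have "finite LP" using finite_subset[OF _ finite_lah_partition[of n]] by (auto simp: LP_def)
  have ext_deg: "ext_deg n k = V.span ((\<lambda>P. mono (edges P)) ` LP \<union> ideal_deg n k)"
    using ext_deg_eq_edge_span[of n k] by (simp add: edge_span_empty LP_def)
  have "V.dim (ext_deg n k) = card LP + V.dim (ideal_deg n k)"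
    unfolding ext_deg
  proof (rule V.dim_span_Un_dual_family[OF \<open>finite LP\<close> finite_monomials, where L = "model_map n"])
    show "ideal_deg n k \<subseteq> V.span (monomials n k)"
      using ideal_deg_subset_ext_deg by (simp add: ext_deg_def monomials_def)
    show "Vector_Spaces.linear qscale qscale (model_map n Q)" for Q
      by (simp add: model_map_def linear_ext_extend)
    show "model_map n Q x = 0" if "Q \<in> LP" "x \<in> ideal_deg n k" for Q x
      using model_map_ideal that by (simp add: LP_def)
    show "model_map n Q (mono (edges P)) = 0 \<longleftrightarrow> Q \<noteq> P" if "Q \<in> LP" "P \<in> LP" for P Q
      using that model_map_own_edges[of n Q] model_map_other_edges[of n P Q]
      by (auto simp: LP_def)
  qed
  then show ?thesis by (simp add: pvb_dual_dim_def lah_def LP)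
qed

end
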